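(* Fix $\theta$ and $g\in\{r,c\}$, assume $c_\gamma\ge1$ and an integer $T_{\max}\ge2$. Let $s^0$ be an arbitrary (possibly random) initial state, generate $a^t\sim\pi_\theta(\cdot|s^t)$, $s^{t+1}\sim P(\cdot|s^t,a^t)$, set $z^t=(s^t,a^t,s^{t+1})$, let $Q\sim\mathrm{Geom}(1/2)$ independent of the trajectory, and define for $X\in\{\mathbf{A}_g(\theta;\cdot),\mathbf{b}_g(\cdot)\}$ $$X^j=2^{-j}\sum_{t=0}^{2^j-1}X(z^t),\qquad X^{\mathrm{MLMC}}=X^0+2^Q(X^Q-X^{Q-1})\mathbf{1}\{2^Q\le T_{\max}\}.$$ Then, for a universal constant $C$ (expectations over $Q$ and the trajectory, conditional on $s^0$): (a) $\|\mathbb{E}[\mathbf{A}^{\mathrm{MLMC}}]-\mathbf{A}_g(\theta)\|^2\le Cc_\gamma^2\tau_{\mathrm{mix}}T_{\max}^{-1}$; (b) $\|\mathbb{E}[\mathbf{b}^{\mathrm{MLMC}}]-\mathbf{b}_g(\theta)\|^2\le Cc_\gamma^2\tau_{\mathrm{mix}}T_{\max}^{-1}$; (c) $\mathbb{E}\|\mathbf{A}^{\mathrm{MLMC}}-\mathbf{A}_g(\theta)\|^2\le Cc_\gamma^2\tau_{\mathrm{mix}}\log T_{\max}$; (d) $\mathbb{E}\|\mathbf{b}^{\mathrm{MLMC}}-\mathbf{b}_g(\theta)\|^2\le Cc_\gamma^2\tau_{\mathrm{mix}}\log T_{\max}$.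
   Context: Ergodic CMDP with finite $\mathcal{S},\mathcal{A}$, $r\in[0,1]$, $c\in[-1,1]$; every policy induces an irreducible aperiodic state chain $P^{\pi}(s,s')=\sum_a\pi(a|s)P(s'|s,a)$ with stationary distribution $d^\pi$; $\nu^\pi(s,a)=d^\pi(s)\pi(a|s)$. Mixing time: $\tau_{\mathrm{mix}}^\theta=\min\{t\ge1:\|(P^{\pi_\theta})^t(s,\cdot)-d^{\pi_\theta}\|_{\mathrm{TV}}\le1/4\ \forall s\}$ and $\tau_{\mathrm{mix}}=\sup_\theta\tau_{\mathrm{mix}}^\theta<\infty$. Feature map $\phi_g:\mathcal{S}\to\mathbb{R}^m$ with $\|\phi_g(s)\|\le1$. For $z=(s,a,s')$: $\mathbf{A}_g(\theta;z)=\begin{pmatrix}c_\gamma&0\\ \phi_g(s)&\phi_g(s)(\phi_g(s)-\phi_g(s'))^\top\end{pmatrix}$, $\mathbf{b}_g(z)=\begin{pmatrix}c_\gamma g(s,a)\\ g(s,a)\phi_g(s)\end{pmatrix}$; $\mathbf{A}_g(\theta)=\mathbb{E}_\theta[\mathbf{A}_g(\theta;z)]$, $\mathbf{b}_g(\theta)=\mathbb{E}_\theta[\mathbf{b}_g(z)]$, with $\mathbb{E}_\theta$ over $(s,a)\sim\nu^{\pi_\theta}$, $s'\sim P(\cdot|s,a)$. Matrix norms are operator norms. *)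

theory Defs
  imports Complex_Main
begin

text \<open>Finite state set S and action set Act are carriers of natural numbers,
so that the universal constant C can be quantified before every problem
dimension.
Vectors in R^(m+1) are functions nat => real on indices {..m};
(m+1)x(m+1) matrices are functions nat => nat => real on {..m} x {..m}.
Index 0 is the first (scalar) block, index i+1 is feature coordinate i.\<close>

type_synonym trans = "nat \<times> nat \<times> nat"

definition is_kernel :: "nat set \<Rightarrow> nat set \<Rightarrow> (nat \<Rightarrow> nat \<Rightarrow> nat \<Rightarrow> real) \<Rightarrow> bool" where
  "is_kernel S Act P \<longleftrightarrow> (\<forall>s\<in>S. \<forall>a\<in>Act. (\<forall>s'\<in>S. P s a s' \<ge> 0) \<and> (\<Sum>s'\<in>S. P s a s') = 1)"

definition is_policy :: "nat set \<Rightarrow> nat set \<Rightarrow> (nat \<Rightarrow> nat \<Rightarrow> real) \<Rightarrow> bool" where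
  "is_policy S Act \<pi> \<longleftrightarrow> (\<forall>s\<in>S. (\<forall>a\<in>Act. \<pi> s a \<ge> 0) \<and> (\<Sum>a\<in>Act. \<pi> s a) = 1)"

definition Ppi :: "nat set \<Rightarrow> (nat \<Rightarrow> nat \<Rightarrow> nat \<Rightarrow> real) \<Rightarrow> (nat \<Rightarrow> nat \<Rightarrow> real) \<Rightarrow> nat \<Rightarrow> nat \<Rightarrow> real" where
  "Ppi Act P \<pi> s s' = (\<Sum>a\<in>Act. \<pi> s a * P s a s')"

fun mpow :: "nat set \<Rightarrow> (nat \<Rightarrow> nat \<Rightarrow> real) \<Rightarrow> nat \<Rightarrow> nat \<Rightarrow> nat \<Rightarrow> real" where
  "mpow S K 0 s s' = (if s = s' then 1 else 0)"
| "mpow S K (Suc n) s s' = (\<Sum>u\<in>S. mpow S K n s u * K u s')"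

definition irreducible :: "nat set \<Rightarrow> (nat \<Rightarrow> nat \<Rightarrow> real) \<Rightarrow> bool" where
  "irreducible S K \<longleftrightarrow> (\<forall>s\<in>S. \<forall>s'\<in>S. \<exists>n>0. mpow S K n s s' > 0)"

definition aperiodic :: "nat set \<Rightarrow> (nat \<Rightarrow> nat \<Rightarrow> real) \<Rightarrow> bool" where
  "aperiodic S K \<longleftrightarrow> (\<forall>s\<in>S. Gcd {n. n > 0 \<and> mpow S K n s s > 0} = 1)"

definition stationary :: "nat set \<Rightarrow> (nat \<Rightarrow> nat \<Rightarrow> real) \<Rightarrow> (nat \<Rightarrow> real) \<Rightarrow> bool" where
  "stationary S K d \<longleftrightarrow> (\<forall>s\<in>S. d s \<ge> 0) \<and> (\<forall>s. s \<notin> S \<longrightarrow> d s = 0) \<and>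
     (\<Sum>s\<in>S. d s) = 1 \<and> (\<forall>s'\<in>S. d s' = (\<Sum>s\<in>S. d s * K s s'))"

text \<open>The (unique, under irreducibility) stationary distribution.\<close>
definition stat_dist :: "nat set \<Rightarrow> (nat \<Rightarrow> nat \<Rightarrow> real) \<Rightarrow> nat \<Rightarrow> real" where
  "stat_dist S K = (THE d. stationary S K d)"

text \<open>Total variation distance (sup over events = half the L1 distance).\<close>
definition tv :: "nat set \<Rightarrow> (nat \<Rightarrow> real) \<Rightarrow> (nat \<Rightarrow> real) \<Rightarrow> real" where
  "tv S \<mu> \<nu> = (\<Sum>s\<in>S. \<bar>\<mu> s - \<nu> s\<bar>) / 2"

definition mix_time :: "nat set \<Rightarrow> (nat \<Rightarrow> nat \<Rightarrow> real) \<Rightarrow> nat" where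
  "mix_time S K = (LEAST t. t \<ge> 1 \<and> (\<forall>s\<in>S. tv S (mpow S K t s) (stat_dist S K) \<le> 1/4))"

definition vnorm :: "nat \<Rightarrow> (nat \<Rightarrow> real) \<Rightarrow> real" where
  "vnorm n x = sqrt (\<Sum>i<n. (x i)\<^sup>2)"

definition opnorm :: "nat \<Rightarrow> (nat \<Rightarrow> nat \<Rightarrow> real) \<Rightarrow> real" where
  "opnorm n M = Sup {vnorm n (\<lambda>i. \<Sum>j<n. M i j * x j) | x. vnorm n x \<le> 1}"

text \<open>A_g(theta; z) and b_g(z) in R^(m+1); phi s i is coordinate i < m of phi_g(s).\<close>
definition Amat :: "real \<Rightarrow> (nat \<Rightarrow> nat \<Rightarrow> real) \<Rightarrow> trans \<Rightarrow> nat \<Rightarrow> nat \<Rightarrow> real" where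
  "Amat c\<gamma> \<phi> z i j = (case z of (s, a, s') \<Rightarrow>
     (if i = 0 then (if j = 0 then c\<gamma> else 0)
      else (if j = 0 then \<phi> s (i - 1) else \<phi> s (i - 1) * (\<phi> s (j - 1) - \<phi> s' (j - 1)))))"

definition bvec :: "real \<Rightarrow> (nat \<Rightarrow> nat \<Rightarrow> real) \<Rightarrow> (nat \<Rightarrow> nat \<Rightarrow> real) \<Rightarrow> trans \<Rightarrow> nat \<Rightarrow> real" where
  "bvec c\<gamma> \<phi> g z i = (case z of (s, a, s') \<Rightarrow>
     (if i = 0 then c\<gamma> * g s a else g s a * \<phi> s (i - 1)))"

definition statE :: "nat set \<Rightarrow> nat set \<Rightarrow> (nat \<Rightarrow> nat \<Rightarrow> nat \<Rightarrow> real) \<Rightarrow> (nat \<Rightarrow> nat \<Rightarrow> real)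
    \<Rightarrow> (trans \<Rightarrow> real) \<Rightarrow> real" where
  "statE S Act P \<pi> F = (let d = stat_dist S (Ppi Act P \<pi>) in
     (\<Sum>s\<in>S. \<Sum>a\<in>Act. \<Sum>s'\<in>S. d s * \<pi> s a * P s a s' * F (s, a, s')))"

text \<open>Expectation of F(z^0,...,z^(n-1)) along the trajectory started at s
  (a^t ~ pi(.|s^t), s^(t+1) ~ P(.|s^t,a^t)).\<close>
fun traj_exp :: "nat set \<Rightarrow> nat set \<Rightarrow> (nat \<Rightarrow> nat \<Rightarrow> nat \<Rightarrow> real) \<Rightarrow> (nat \<Rightarrow> nat \<Rightarrow> real)
    \<Rightarrow> nat \<Rightarrow> nat \<Rightarrow> (trans list \<Rightarrow> real) \<Rightarrow> real" where
  "traj_exp S Act P \<pi> 0 s F = F []"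
| "traj_exp S Act P \<pi> (Suc n) s F =
     (\<Sum>a\<in>Act. \<Sum>s'\<in>S. \<pi> s a * P s a s' * traj_exp S Act P \<pi> n s' (\<lambda>zs. F ((s, a, s') # zs)))"

definition lvl :: "(trans \<Rightarrow> real) \<Rightarrow> trans list \<Rightarrow> nat \<Rightarrow> real" where
  "lvl X zs j = (\<Sum>t<2^j. X (zs ! t)) / 2^j"

definition mlmc :: "(trans \<Rightarrow> real) \<Rightarrow> nat \<Rightarrow> nat \<Rightarrow> trans list \<Rightarrow> real" where
  "mlmc X Tmax q zs = lvl X zs 0 +
     (if 2^q \<le> Tmax then 2^q * (lvl X zs q - lvl X zs (q - 1)) else 0)"

text \<open>Joint expectation over Q ~ Geom(1/2) on {1,2,...} (P(Q=q) = 2^(-q)),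
  independent of the trajectory from s0, of a quantity F q zs which depends only
  on the first 2^q transitions.\<close>
definition mlmc_exp :: "nat set \<Rightarrow> nat set \<Rightarrow> (nat \<Rightarrow> nat \<Rightarrow> nat \<Rightarrow> real) \<Rightarrow> (nat \<Rightarrow> nat \<Rightarrow> real)
    \<Rightarrow> nat \<Rightarrow> (nat \<Rightarrow> trans list \<Rightarrow> real) \<Rightarrow> real" where
  "mlmc_exp S Act P \<pi> s0 F = (\<Sum>k. (1/2)^(Suc k) * traj_exp S Act P \<pi> (2^(Suc k)) s0 (F (Suc k)))"

end

(*
  For a fixed policy the state chain K is an irreducible aperiodic stochastic matrix, so some
  power K^N is entrywise positive and, by Doeblin's argument, contracts zero-sum vectors in l1.
  This yields the stationary distribution d as the limit of the rows of K^n, the existence of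
  the mixing time tau, and the decay ||K^t(s,.) - d||_1 <= 2 (1/2)^(t div tau).

  Along a trajectory, the mean of the average X^j of the first 2^j samples is then within
  O(tau / 2^j) of E_theta X, and since the correlations of the centred samples decay
  geometrically in their time lag, also E ||X^j - E_theta X||^2 = O(tau / 2^j).  In X^MLMC the
  level differences carry the weight 2^Q = 1 / P(Q), so their expectations telescope to that of
  X^J with 2^J <= Tmax < 2^(J+1), which gives the bias O(tau / Tmax); each of the J = O(log Tmax)
  active levels contributes O(tau) to the second moment.  Operator norms are bounded by
  Frobenius norms, and ||A_g(z)||_F^2 <= 6 c_gamma^2, ||b_g(z)||^2 <= 2 c_gamma^2.
*)

theory Submission
  imports Defs "HOL-Analysis.Convex"
begin

section \<open>Contraction of stochastic matrices\<close>

definition l1_norm :: "nat set \<Rightarrow> (nat \<Rightarrow> real) \<Rightarrow> real" where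
  "l1_norm S v = (\<Sum>y\<in>S. \<bar>v y\<bar>)"

definition vec_mat :: "nat set \<Rightarrow> (nat \<Rightarrow> real) \<Rightarrow> (nat \<Rightarrow> nat \<Rightarrow> real) \<Rightarrow> nat \<Rightarrow> real" where
  "vec_mat S v M y = (\<Sum>x\<in>S. v x * M x y)"

lemma l1_norm_nonneg: "0 \<le> l1_norm S v"
  unfolding l1_norm_def by (simp add: sum_nonneg)

lemma l1_norm_cong: "(\<And>y. y \<in> S \<Longrightarrow> f y = g y) \<Longrightarrow> l1_norm S f = l1_norm S g"
  unfolding l1_norm_def by simp

lemma l1_norm_diff_distributions_le:
  assumes "\<forall>y\<in>S. 0 \<le> f y" "(\<Sum>y\<in>S. f y) = 1" "\<forall>y\<in>S. 0 \<le> g y" "(\<Sum>y\<in>S. g y) = 1"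
  shows "l1_norm S (\<lambda>y. f y - g y) \<le> 2"
proof -
  have "l1_norm S (\<lambda>y. f y - g y) \<le> (\<Sum>y\<in>S. f y + g y)"
    unfolding l1_norm_def using assms by (intro sum_mono) (simp add: abs_le_iff)
  also have "\<dots> = 2" using assms by (simp add: sum.distrib)
  finally show ?thesis .
qed

lemma vec_mat_diff: "vec_mat S (\<lambda>x. f x - g x) M y = vec_mat S f M y - vec_mat S g M y"
  unfolding vec_mat_def by (simp add: left_diff_distrib sum_subtractf)

lemma l1_norm_vec_mat_zero_sum_le:
  assumes "finite S" and zero_sum: "(\<Sum>x\<in>S. v x) = 0"
    and rows: "\<And>x. x \<in> S \<Longrightarrow> (\<Sum>y\<in>S. \<bar>M x y - D y\<bar>) \<le> c"
  shows "l1_norm S (vec_mat S v M) \<le> c * l1_norm S v"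
proof -
  txt \<open>As \<open>v\<close> has zero sum, the common row \<open>D\<close> may be subtracted from every row of \<open>M\<close>.\<close>
  have eq: "vec_mat S v M y = (\<Sum>x\<in>S. v x * (M x y - D y))" for y
    using zero_sum by (simp add: vec_mat_def right_diff_distrib sum_subtractf flip: sum_distrib_right)
  have "l1_norm S (vec_mat S v M) \<le> (\<Sum>y\<in>S. \<Sum>x\<in>S. \<bar>v x\<bar> * \<bar>M x y - D y\<bar>)"
    unfolding l1_norm_def eq by (intro sum_mono) (metis (no_types, lifting) abs_mult sum.cong sum_abs)
  also have "\<dots> = (\<Sum>x\<in>S. \<bar>v x\<bar> * (\<Sum>y\<in>S. \<bar>M x y - D y\<bar>))"
    by (subst sum.swap) (simp add: sum_distrib_left)
  also have "\<dots> \<le> (\<Sum>x\<in>S. \<bar>v x\<bar> * c)"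
    by (intro sum_mono mult_left_mono rows) simp_all
  finally show ?thesis by (simp add: l1_norm_def sum_distrib_left mult.commute)
qed

lemma stationaryD:
  assumes "stationary S K d"
  shows stationary_sum: "(\<Sum>x\<in>S. d x) = 1"
    and stationary_nonneg: "x \<in> S \<Longrightarrow> 0 \<le> d x"
    and stationary_outside: "x \<notin> S \<Longrightarrow> d x = 0"
    and stationary_fixpoint: "y \<in> S \<Longrightarrow> d y = (\<Sum>x\<in>S. d x * K x y)"
  using assms unfolding stationary_def by blast+

lemma add_closed_mult_mem:
  fixes A :: "nat set"
  assumes "\<forall>a\<in>A. \<forall>b\<in>A. a + b \<in> A" "a \<in> A" "1 \<le> k"
  shows "k * a \<in> A"
  using assms(3)
proof (induction k)
  case (Suc k) then show ?case using assms(1,2) by (cases "k = 0") auto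
qed simp

lemma add_closed_Gcd_eq_1_consecutive:
  fixes A :: "nat set"
  assumes pos: "\<forall>a\<in>A. 0 < a" and add: "\<forall>a\<in>A. \<forall>b\<in>A. a + b \<in> A" and gcd: "Gcd A = 1"
  shows "\<exists>q\<in>A. q + 1 \<in> A"
proof -
  define gap where "gap d \<longleftrightarrow> 0 < d \<and> (\<exists>x\<in>A. \<exists>y\<in>A. d + y = x)" for d
  obtain a0 where a0: "a0 \<in> A" using gcd by fastforce
  then have "gap a0" unfolding gap_def using pos add by (intro conjI bexI[of _ "a0 + a0"] bexI[of _ a0]) auto
  define \<delta> where "\<delta> = (LEAST d. gap d)"
  have "gap \<delta>" unfolding \<delta>_def by (rule LeastI) fact
  then obtain p q where pq: "p \<in> A" "q \<in> A" "\<delta> + q = p" and \<delta>_pos: "0 < \<delta>" unfolding gap_def by auto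
  txt \<open>The smallest gap divides every element: otherwise a remainder modulo it would be a smaller gap.\<close>
  have "\<delta> dvd a" if a: "a \<in> A" for a
  proof (rule ccontr)
    assume "\<not> \<delta> dvd a"
    define k r where "k = a div \<delta>" and "r = a mod \<delta>"
    have a_eq: "a = k * \<delta> + r" unfolding k_def r_def by simp
    have r: "0 < r" "r < \<delta>" using \<open>\<not> \<delta> dvd a\<close> \<delta>_pos unfolding r_def by (auto simp: dvd_eq_mod_eq_0)
    have "gap r"
    proof (cases "k = 0")
      case True
      then show ?thesis unfolding gap_def using r a_eq a pq add by auto
    next
      case False
      have "r + k * p = a + k * q" unfolding a_eq pq(3)[symmetric] by (simp add: algebra_simps)
      moreover have "k * p \<in> A" "a + k * q \<in> A"
        using add_closed_mult_mem[OF add pq(1)] add_closed_mult_mem[OF add pq(2)] add a False by auto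
      ultimately show ?thesis unfolding gap_def using r by metis
    qed
    then have "\<delta> \<le> r" unfolding \<delta>_def by (rule Least_le)
    then show False using r by simp
  qed
  then have "\<delta> = 1" using gcd by (metis Gcd_greatest nat_dvd_1_iff_1)
  then show ?thesis using pq by auto
qed

lemma add_closed_consecutive_contains_large:
  fixes A :: "nat set"
  assumes add: "\<forall>a\<in>A. \<forall>b\<in>A. a + b \<in> A" and "q \<in> A" "q + 1 \<in> A" "0 < q" and "q * q \<le> n"
  shows "n \<in> A"
proof -
  define k r where "k = n div q" and "r = n mod q"
  have r: "r < q" unfolding r_def using \<open>0 < q\<close> by simp
  have "q \<le> k" unfolding k_def using div_le_mono[OF \<open>q * q \<le> n\<close>, of q] \<open>0 < q\<close> by simp
  txt \<open>Trade \<open>r\<close> copies of \<open>q\<close> for copies of \<open>q + 1\<close>.\<close>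
  then have "n = (k - r) * q + r * (q + 1)" "1 \<le> k - r"
    using r unfolding k_def r_def by (simp_all add: algebra_simps diff_mult_distrib)
  then show ?thesis
    using add_closed_mult_mem[OF add \<open>q \<in> A\<close>] add_closed_mult_mem[OF add \<open>q + 1 \<in> A\<close>, of r] add
    by (cases "r = 0") auto
qed

locale stochastic_matrix =
  fixes S :: "nat set" and K :: "nat \<Rightarrow> nat \<Rightarrow> real"
  assumes finite_S: "finite S"
    and K_nonneg: "s \<in> S \<Longrightarrow> s' \<in> S \<Longrightarrow> 0 \<le> K s s'"
    and K_row_sum: "s \<in> S \<Longrightarrow> (\<Sum>s'\<in>S. K s s') = 1"
begin

abbreviation "Kpow n \<equiv> mpow S K n"

lemma Kpow_nonneg: "s \<in> S \<Longrightarrow> s' \<in> S \<Longrightarrow> 0 \<le> Kpow n s s'"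
  by (induction n arbitrary: s') (auto intro!: sum_nonneg mult_nonneg_nonneg K_nonneg)

lemma Kpow_row_sum: "s \<in> S \<Longrightarrow> (\<Sum>s'\<in>S. Kpow n s s') = 1"
proof (induction n)
  case 0 then show ?case using finite_S by simp
next
  case (Suc n)
  have "(\<Sum>s'\<in>S. Kpow (Suc n) s s') = (\<Sum>u\<in>S. Kpow n s u * (\<Sum>s'\<in>S. K u s'))"
    by (simp add: sum_distrib_left) (rule sum.swap)
  also have "\<dots> = 1" using Suc by (simp add: K_row_sum)
  finally show ?case .
qed

lemma Kpow_add: "s \<in> S \<Longrightarrow> u \<in> S \<Longrightarrow> Kpow (a + b) s u = (\<Sum>v\<in>S. Kpow a s v * Kpow b v u)"
proof (induction b arbitrary: u)
  case 0 then show ?case using finite_S by (simp add: if_distrib cong: if_cong)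
next
  case (Suc b)
  then have "Kpow (a + Suc b) s u = (\<Sum>w\<in>S. (\<Sum>v\<in>S. Kpow a s v * Kpow b v w) * K w u)"
    by simp
  also have "\<dots> = (\<Sum>v\<in>S. Kpow a s v * Kpow (Suc b) v u)"
    by (simp add: sum_distrib_left sum_distrib_right mult.assoc) (rule sum.swap)
  finally show ?case .
qed

lemma Kpow_Suc_0: "s \<in> S \<Longrightarrow> Kpow (Suc 0) s v = K s v"
proof -
  have "Kpow (Suc 0) s v = (\<Sum>u\<in>S. if s = u then K u v else 0)" by (auto intro!: sum.cong)
  then show "s \<in> S \<Longrightarrow> ?thesis" using finite_S by simp
qed

lemma Kpow_Suc_left: "s \<in> S \<Longrightarrow> u \<in> S \<Longrightarrow> Kpow (Suc n) s u = (\<Sum>v\<in>S. K s v * Kpow n v u)"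
  using Kpow_add[of s u 1 n] by (simp add: Kpow_Suc_0 del: mpow.simps)

lemma Kpow_mult_le: "s \<in> S \<Longrightarrow> u \<in> S \<Longrightarrow> v \<in> S \<Longrightarrow> Kpow a s v * Kpow b v u \<le> Kpow (a + b) s u"
  unfolding Kpow_add by (rule member_le_sum) (auto intro: mult_nonneg_nonneg Kpow_nonneg simp: finite_S)

lemma vec_mat_Kpow_0: "y \<in> S \<Longrightarrow> vec_mat S v (Kpow 0) y = v y"
  unfolding vec_mat_def using finite_S by (simp add: if_distrib cong: if_cong)

lemma vec_mat_Kpow_add: "u \<in> S \<Longrightarrow> vec_mat S v (Kpow (a + b)) u = vec_mat S (vec_mat S v (Kpow a)) (Kpow b) u"
  unfolding vec_mat_def
  by (simp add: Kpow_add sum_distrib_left sum_distrib_right mult.assoc) (rule sum.swap)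

lemma vec_mat_Kpow_row: "s \<in> S \<Longrightarrow> y \<in> S \<Longrightarrow> vec_mat S (Kpow k s) (Kpow n) y = Kpow (k + n) s y"
  unfolding vec_mat_def by (simp add: Kpow_add del: mpow.simps)

lemma vec_mat_Kpow_zero_sum: "(\<Sum>x\<in>S. v x) = 0 \<Longrightarrow> (\<Sum>y\<in>S. vec_mat S v (Kpow n) y) = 0"
  unfolding vec_mat_def by (subst sum.swap) (simp add: Kpow_row_sum flip: sum_distrib_left)

lemma stationary_vec_mat_Kpow:
  assumes "stationary S K d" "y \<in> S"
  shows "vec_mat S d (Kpow n) y = d y"
  using assms(2)
proof (induction n arbitrary: y)
  case 0 then show ?case by (simp add: vec_mat_Kpow_0 del: mpow.simps)
next
  case (Suc n)
  have "vec_mat S d (Kpow (n + 1)) y = (\<Sum>x\<in>S. vec_mat S d (Kpow n) x * K x y)"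
    unfolding vec_mat_Kpow_add[OF Suc.prems] vec_mat_def[of S _ "Kpow 1"]
    by (intro sum.cong refl) (simp add: Kpow_Suc_0 del: mpow.simps)
  also have "\<dots> = (\<Sum>x\<in>S. d x * K x y)"
    using Suc.IH by (simp cong: sum.cong del: mpow.simps)
  also have "\<dots> = d y"
    using stationary_fixpoint[OF assms(1) Suc.prems] by simp
  finally show ?case by (simp del: mpow.simps)
qed

lemma l1_norm_vec_mat_Kpow_le:
  "(\<Sum>x\<in>S. v x) = 0 \<Longrightarrow> l1_norm S (vec_mat S v (Kpow n)) \<le> l1_norm S v"
  using l1_norm_vec_mat_zero_sum_le[OF finite_S, where D = "\<lambda>_. 0" and c = 1]
  by (simp add: Kpow_nonneg Kpow_row_sum del: mpow.simps)

lemma l1_norm_vec_mat_Kpow_geometric: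
  assumes "0 < N" "0 \<le> \<rho>"
    and contr: "\<And>v. (\<Sum>x\<in>S. v x) = 0 \<Longrightarrow> l1_norm S (vec_mat S v (Kpow N)) \<le> \<rho> * l1_norm S v"
    and zero_sum: "(\<Sum>x\<in>S. v x) = 0"
  shows "l1_norm S (vec_mat S v (Kpow n)) \<le> \<rho> ^ (n div N) * l1_norm S v"
proof -
  have blocks: "l1_norm S (vec_mat S w (Kpow (k * N))) \<le> \<rho> ^ k * l1_norm S w"
    if "(\<Sum>x\<in>S. w x) = 0" for w k
  proof (induction k)
    case 0
    show ?case by (simp add: l1_norm_cong[OF vec_mat_Kpow_0] del: mpow.simps)
  next
    case (Suc k)
    have "l1_norm S (vec_mat S w (Kpow (Suc k * N))) = l1_norm S (vec_mat S (vec_mat S w (Kpow (k * N))) (Kpow N))"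
      by (rule l1_norm_cong) (simp add: vec_mat_Kpow_add[symmetric] add.commute del: mpow.simps)
    also have "\<dots> \<le> \<rho> * l1_norm S (vec_mat S w (Kpow (k * N)))"
      by (rule contr) (rule vec_mat_Kpow_zero_sum[OF that])
    also have "\<dots> \<le> \<rho> * (\<rho> ^ k * l1_norm S w)"
      by (rule mult_left_mono[OF Suc \<open>0 \<le> \<rho>\<close>])
    finally show ?case by simp
  qed
  have "l1_norm S (vec_mat S v (Kpow n)) = l1_norm S (vec_mat S (vec_mat S v (Kpow (n mod N))) (Kpow (n div N * N)))"
    by (rule l1_norm_cong) (simp add: vec_mat_Kpow_add[symmetric] del: mpow.simps)
  also have "\<dots> \<le> \<rho> ^ (n div N) * l1_norm S (vec_mat S v (Kpow (n mod N)))"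
    by (rule blocks) (rule vec_mat_Kpow_zero_sum[OF zero_sum])
  also have "\<dots> \<le> \<rho> ^ (n div N) * l1_norm S v"
    using assms(2) by (intro mult_left_mono l1_norm_vec_mat_Kpow_le zero_sum) simp
  finally show ?thesis .
qed

lemma aperiodic_Kpow_diag_pos:
  assumes "aperiodic S K" "s \<in> S"
  shows "\<exists>M. \<forall>n\<ge>M. 0 < Kpow n s s"
proof -
  let ?A = "{n. 0 < n \<and> 0 < Kpow n s s}"
  have add: "\<forall>a\<in>?A. \<forall>b\<in>?A. a + b \<in> ?A"
  proof (intro ballI)
    fix a b assume "a \<in> ?A" "b \<in> ?A"
    then have "0 < Kpow a s s * Kpow b s s" "0 < a + b" by auto
    then show "a + b \<in> ?A" using Kpow_mult_le[OF assms(2) assms(2) assms(2), of a b] by auto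
  qed
  moreover have "Gcd ?A = 1" using assms unfolding aperiodic_def by auto
  ultimately obtain q where "q \<in> ?A" "q + 1 \<in> ?A"
    using add_closed_Gcd_eq_1_consecutive[of ?A] by blast
  then have "n \<in> ?A" if "q * q \<le> n" for n
    using add_closed_consecutive_contains_large[OF add, of q n] that by auto
  then show ?thesis by blast
qed

lemma irreducible_aperiodic_Kpow_pos:
  assumes irr: "irreducible S K" and ap: "aperiodic S K"
  shows "\<exists>N>0. \<forall>s\<in>S. \<forall>s'\<in>S. 0 < Kpow N s s'"
proof -
  have "\<forall>s\<in>S. \<exists>M. \<forall>n\<ge>M. 0 < Kpow n s s" using aperiodic_Kpow_diag_pos[OF ap] by blast
  from bchoice[OF this] obtain M where M: "\<forall>s\<in>S. \<forall>n\<ge>M s. 0 < Kpow n s s" by blast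
  have "\<forall>s\<in>S. \<forall>s'\<in>S. \<exists>n. 0 < n \<and> 0 < Kpow n s s'" using irr unfolding irreducible_def by blast
  then have "\<forall>s\<in>S. \<exists>L. \<forall>s'\<in>S. 0 < L s' \<and> 0 < Kpow (L s') s s'" by (auto intro: bchoice)
  from bchoice[OF this] obtain L where L: "\<forall>s\<in>S. \<forall>s'\<in>S. 0 < L s s' \<and> 0 < Kpow (L s s') s s'" by blast
  define N where "N = Max (M ` S) + Max (case_prod L ` (S \<times> S)) + 1"
  have "0 < Kpow N s s'" if ss': "s \<in> S" "s' \<in> S" for s s'
  proof -
    txt \<open>Return to \<open>s\<close> in \<open>N - L s s'\<close> steps, then go to \<open>s'\<close> in \<open>L s s'\<close> steps.\<close>
    have "L s s' \<le> Max (case_prod L ` (S \<times> S))"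
      using ss' finite_S by (intro Max_ge) force+
    moreover have "M s \<le> Max (M ` S)"
      using ss' finite_S by simp
    ultimately have le: "M s \<le> N - L s s'" "L s s' \<le> N" unfolding N_def by linarith+
    have "0 < Kpow (N - L s s') s s" using M ss'(1) le(1) by blast
    moreover have "0 < Kpow (L s s') s s'" using L ss' by blast
    ultimately have "0 < Kpow (N - L s s') s s * Kpow (L s s') s s'" by simp
    also have "\<dots> \<le> Kpow N s s'"
      using Kpow_mult_le[OF ss'(1) ss'(2) ss'(1), of "N - L s s'" "L s s'"] le(2) by simp
    finally show ?thesis .
  qed
  moreover have "0 < N" unfolding N_def by simp
  ultimately show ?thesis by blast
qed

lemma Kpow_pos_contraction:
  assumes pos: "\<forall>s\<in>S. \<forall>s'\<in>S. 0 < Kpow N s s'" and "S \<noteq> {}"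
  shows "\<exists>\<rho>. 0 \<le> \<rho> \<and> \<rho> < 1 \<and>
    (\<forall>v. (\<Sum>x\<in>S. v x) = 0 \<longrightarrow> l1_norm S (vec_mat S v (Kpow N)) \<le> \<rho> * l1_norm S v)"
proof -
  define \<delta> where "\<delta> = Min ((\<lambda>x. Kpow N (fst x) (snd x)) ` (S \<times> S))"
  have \<delta>_le: "\<delta> \<le> Kpow N s s'" if "s \<in> S" "s' \<in> S" for s s'
    unfolding \<delta>_def using that finite_S by (intro Min_le) force+
  have \<delta>_pos: "0 < \<delta>" unfolding \<delta>_def using finite_S \<open>S \<noteq> {}\<close> pos by (subst Min_gr_iff) auto
  define \<rho> where "\<rho> = 1 - real (card S) * \<delta>"
  have rows: "(\<Sum>y\<in>S. \<bar>Kpow N x y - \<delta>\<bar>) = \<rho>" if "x \<in> S" for x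
  proof -
    have "(\<Sum>y\<in>S. \<bar>Kpow N x y - \<delta>\<bar>) = (\<Sum>y\<in>S. Kpow N x y - \<delta>)"
      using \<delta>_le that by (intro sum.cong) auto
    then show ?thesis using that by (simp add: \<rho>_def sum_subtractf Kpow_row_sum del: mpow.simps)
  qed
  obtain x0 where "x0 \<in> S" using \<open>S \<noteq> {}\<close> by auto
  then have "0 \<le> \<rho>" using rows[of x0] by (metis sum_nonneg abs_ge_zero)
  moreover have "\<rho> < 1" unfolding \<rho>_def using \<delta>_pos finite_S \<open>S \<noteq> {}\<close> by (simp add: card_gt_0_iff)
  moreover have "l1_norm S (vec_mat S v (Kpow N)) \<le> \<rho> * l1_norm S v" if "(\<Sum>x\<in>S. v x) = 0" for v
    by (rule l1_norm_vec_mat_zero_sum_le[OF finite_S that, where D = "\<lambda>_. \<delta>"]) (simp add: rows)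
  ultimately show ?thesis by blast
qed

definition geometric_contraction :: "nat \<Rightarrow> real \<Rightarrow> bool" where
  "geometric_contraction N \<rho> \<longleftrightarrow> 0 < N \<and> 0 \<le> \<rho> \<and> \<rho> < 1 \<and>
     (\<forall>v n. (\<Sum>x\<in>S. v x) = 0 \<longrightarrow> l1_norm S (vec_mat S v (Kpow n)) \<le> \<rho> ^ (n div N) * l1_norm S v)"

lemma irreducible_aperiodic_geometric_contraction:
  assumes "irreducible S K" "aperiodic S K" "S \<noteq> {}"
  shows "\<exists>N \<rho>. geometric_contraction N \<rho>"
proof -
  obtain N where N: "0 < N" "\<forall>s\<in>S. \<forall>s'\<in>S. 0 < Kpow N s s'"
    using irreducible_aperiodic_Kpow_pos[OF assms(1,2)] by blast
  obtain \<rho> where \<rho>: "0 \<le> \<rho>" "\<rho> < 1"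
    and contr: "\<forall>v. (\<Sum>x\<in>S. v x) = 0 \<longrightarrow> l1_norm S (vec_mat S v (Kpow N)) \<le> \<rho> * l1_norm S v"
    using Kpow_pos_contraction[OF N(2) assms(3)] by blast
  have "geometric_contraction N \<rho>"
    unfolding geometric_contraction_def
    using l1_norm_vec_mat_Kpow_geometric[OF N(1) \<rho>(1)] contr N(1) \<rho> by blast
  then show ?thesis by blast
qed

lemma geometric_contraction_row_dist:
  assumes "geometric_contraction N \<rho>" "s \<in> S"
    and \<mu>: "\<forall>y\<in>S. 0 \<le> \<mu> y" "(\<Sum>y\<in>S. \<mu> y) = 1"
  shows "l1_norm S (\<lambda>y. Kpow n s y - vec_mat S \<mu> (Kpow n) y) \<le> 2 * \<rho> ^ (n div N)"
proof -
  let ?v = "\<lambda>x. Kpow 0 s x - \<mu> x"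
  have zero_sum: "(\<Sum>x\<in>S. ?v x) = 0"
    using \<mu> \<open>s \<in> S\<close> by (simp add: sum_subtractf Kpow_row_sum del: mpow.simps)
  have "l1_norm S (\<lambda>y. Kpow n s y - vec_mat S \<mu> (Kpow n) y) = l1_norm S (vec_mat S ?v (Kpow n))"
    using \<open>s \<in> S\<close> by (intro l1_norm_cong) (simp add: vec_mat_diff vec_mat_Kpow_row del: mpow.simps)
  also have "\<dots> \<le> \<rho> ^ (n div N) * l1_norm S ?v"
    using assms(1) zero_sum unfolding geometric_contraction_def by blast
  also have "\<dots> \<le> \<rho> ^ (n div N) * 2"
    using assms(1) \<mu> \<open>s \<in> S\<close> unfolding geometric_contraction_def
    by (intro mult_left_mono l1_norm_diff_distributions_le)
       (simp_all add: Kpow_nonneg Kpow_row_sum del: mpow.simps)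
  finally show ?thesis by simp
qed

lemma Kpow_convergent:
  assumes "geometric_contraction N \<rho>" "s \<in> S" "y \<in> S"
  shows "convergent (\<lambda>n. Kpow n s y)"
proof -
  have N: "0 < N" and \<rho>: "0 \<le> \<rho>" "\<rho> < 1" using assms(1) unfolding geometric_contraction_def by auto
  have step: "\<bar>Kpow n' s y - Kpow n s y\<bar> \<le> 2 * \<rho> ^ (n div N)" if "n \<le> n'" for n n'
  proof -
    have "\<bar>Kpow n' s y - Kpow n s y\<bar> \<le> l1_norm S (\<lambda>y. Kpow n s y - vec_mat S (Kpow (n' - n) s) (Kpow n) y)"
      using assms(2,3) finite_S that unfolding l1_norm_def
      by (subst abs_minus_commute) (auto intro!: member_le_sum simp: vec_mat_Kpow_row simp del: mpow.simps)
    also have "\<dots> \<le> 2 * \<rho> ^ (n div N)"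
      using assms(2) by (intro geometric_contraction_row_dist[OF assms(1)])
        (simp_all add: Kpow_nonneg Kpow_row_sum del: mpow.simps)
    finally show ?thesis .
  qed
  have "Cauchy (\<lambda>n. Kpow n s y)"
  proof (rule CauchyI)
    fix e :: real assume "0 < e"
    then obtain k where k: "\<rho> ^ k < e / 2" using real_arch_pow_inv[of "e / 2" \<rho>] \<rho>(2) by auto
    have "\<bar>Kpow n' s y - Kpow n s y\<bar> < e" if "k * N \<le> n" "n \<le> n'" for n n'
    proof -
      have "k \<le> n div N" using div_le_mono[OF that(1), of N] N by simp
      then have "\<rho> ^ (n div N) \<le> \<rho> ^ k" using \<rho> by (intro power_decreasing) auto
      then show ?thesis using step[OF that(2)] k by simp
    qed
    then have "\<forall>m\<ge>k * N. \<forall>n\<ge>k * N. \<bar>Kpow m s y - Kpow n s y\<bar> < e"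
      by (metis abs_minus_commute nle_le)
    then show "\<exists>M. \<forall>m\<ge>M. \<forall>n\<ge>M. norm (Kpow m s y - Kpow n s y) < e" by auto
  qed
  then show ?thesis by (simp add: Cauchy_convergent_iff)
qed

lemma stationary_Kpow_limit:
  assumes "s \<in> S" and lim: "\<And>y. y \<in> S \<Longrightarrow> (\<lambda>n. Kpow n s y) \<longlonglongrightarrow> d y"
    and outside: "\<And>y. y \<notin> S \<Longrightarrow> d y = 0"
  shows "stationary S K d"
  unfolding stationary_def
proof (intro conjI ballI allI impI)
  fix y assume "y \<in> S"
  show "0 \<le> d y"
    by (rule LIMSEQ_le_const[OF lim[OF \<open>y \<in> S\<close>]]) (use Kpow_nonneg \<open>s \<in> S\<close> \<open>y \<in> S\<close> in auto)
  have "(\<lambda>n. Kpow (Suc n) s y) \<longlonglongrightarrow> d y" using lim[OF \<open>y \<in> S\<close>] by (rule LIMSEQ_Suc)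
  moreover have "(\<lambda>n. Kpow (Suc n) s y) \<longlonglongrightarrow> (\<Sum>x\<in>S. d x * K x y)"
    unfolding mpow.simps by (intro tendsto_sum tendsto_mult_right lim)
  ultimately show "d y = (\<Sum>x\<in>S. d x * K x y)" by (rule LIMSEQ_unique)
next
  have "(\<lambda>n. \<Sum>y\<in>S. Kpow n s y) \<longlonglongrightarrow> (\<Sum>y\<in>S. d y)" by (intro tendsto_sum lim)
  then show "(\<Sum>y\<in>S. d y) = 1" using Kpow_row_sum[OF \<open>s \<in> S\<close>] by (simp add: LIMSEQ_const_iff)
qed (use outside in blast)

lemma geometric_contraction_stationary_unique:
  assumes "geometric_contraction N \<rho>" "stationary S K d" "stationary S K d'"
  shows "d' = d"
proof -
  let ?v = "\<lambda>x. d' x - d x"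
  have N: "0 < N" and \<rho>: "\<rho> < 1" using assms(1) unfolding geometric_contraction_def by auto
  have "(\<Sum>x\<in>S. ?v x) = 0" using stationary_sum[OF assms(2)] stationary_sum[OF assms(3)] by (simp add: sum_subtractf)
  then have "l1_norm S (vec_mat S ?v (Kpow N)) \<le> \<rho> * l1_norm S ?v"
    using assms(1) N unfolding geometric_contraction_def by (metis div_self less_irrefl power_one_right)
  moreover have "l1_norm S (vec_mat S ?v (Kpow N)) = l1_norm S ?v"
    by (rule l1_norm_cong) (simp add: vec_mat_diff stationary_vec_mat_Kpow assms(2,3) del: mpow.simps)
  ultimately have "l1_norm S ?v = 0" using \<rho> l1_norm_nonneg[of S ?v] by (auto simp: mult_le_cancel_right1)
  then have "\<forall>y\<in>S. d' y = d y" unfolding l1_norm_def using finite_S by (subst (asm) sum_nonneg_eq_0_iff) auto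
  then show ?thesis using stationary_outside[OF assms(2)] stationary_outside[OF assms(3)] by (auto intro!: ext)
qed

lemma stat_dist_stationary:
  assumes "geometric_contraction N \<rho>" "S \<noteq> {}"
  shows "stationary S K (stat_dist S K)"
proof -
  obtain s where "s \<in> S" using assms(2) by blast
  define d where "d y = (if y \<in> S then lim (\<lambda>n. Kpow n s y) else 0)" for y
  have stat: "stationary S K d"
  proof (rule stationary_Kpow_limit[OF \<open>s \<in> S\<close>])
    show "(\<lambda>n. Kpow n s y) \<longlonglongrightarrow> d y" if "y \<in> S" for y
      using Kpow_convergent[OF assms(1) \<open>s \<in> S\<close> that] that by (simp add: d_def convergent_LIMSEQ_iff)
  qed (simp add: d_def)
  show ?thesis
    unfolding stat_dist_def using geometric_contraction_stationary_unique[OF assms(1) stat]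
    by (rule theI[of "stationary S K", OF stat])
qed

lemma mix_time_bound:
  assumes "geometric_contraction N \<rho>" "S \<noteq> {}"
  shows "1 \<le> mix_time S K" and "s \<in> S \<Longrightarrow> l1_norm S (\<lambda>y. Kpow (mix_time S K) s y - stat_dist S K y) \<le> 1/2"
proof -
  have N: "0 < N" and \<rho>: "0 \<le> \<rho>" "\<rho> < 1" using assms(1) unfolding geometric_contraction_def by auto
  note stat = stat_dist_stationary[OF assms]
  have row_dist: "l1_norm S (\<lambda>y. Kpow t s y - stat_dist S K y) \<le> 2 * \<rho> ^ (t div N)" if "s \<in> S" for s t
    using geometric_contraction_row_dist[OF assms(1) that, of "stat_dist S K" t] that
      stationary_vec_mat_Kpow[OF stat] stationary_nonneg[OF stat] stationary_sum[OF stat]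
    by (simp cong: l1_norm_cong del: mpow.simps)
  obtain k where k: "\<rho> ^ k < 1/4" using real_arch_pow_inv[of "1/4" \<rho>] \<rho>(2) by auto
  have "tv S (Kpow ((k + 1) * N) s) (stat_dist S K) \<le> 1/4" if "s \<in> S" for s
  proof -
    have "\<rho> ^ ((k + 1) * N div N) \<le> \<rho> ^ k" using N \<rho> by (intro power_decreasing) auto
    then have "l1_norm S (\<lambda>y. Kpow ((k + 1) * N) s y - stat_dist S K y) \<le> 1/2"
      using row_dist[OF that, of "(k + 1) * N"] k by linarith
    then show ?thesis by (simp add: tv_def l1_norm_def)
  qed
  then have "\<exists>t. 1 \<le> t \<and> (\<forall>s\<in>S. tv S (Kpow t s) (stat_dist S K) \<le> 1/4)"
    using N by (intro exI[of _ "(k + 1) * N"]) auto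
  then have "1 \<le> mix_time S K \<and> (\<forall>s\<in>S. tv S (Kpow (mix_time S K) s) (stat_dist S K) \<le> 1/4)"
    unfolding mix_time_def by (rule LeastI_ex)
  then show "1 \<le> mix_time S K" and "s \<in> S \<Longrightarrow> l1_norm S (\<lambda>y. Kpow (mix_time S K) s y - stat_dist S K y) \<le> 1/2"
    by (auto simp: tv_def l1_norm_def)
qed

end

definition sqnorm :: "'i set \<Rightarrow> ('i \<Rightarrow> real) \<Rightarrow> real" where
  "sqnorm I v = (\<Sum>i\<in>I. (v i)\<^sup>2)"

lemma sqnorm_nonneg: "0 \<le> sqnorm I v"
  unfolding sqnorm_def by (simp add: sum_nonneg)

lemma sqnorm_scale: "sqnorm I (\<lambda>i. c * v i) = c\<^sup>2 * sqnorm I v"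
  unfolding sqnorm_def by (simp add: power_mult_distrib sum_distrib_left)

lemma sqnorm_diff_le: "sqnorm I (\<lambda>i. a i - b i) \<le> 2 * sqnorm I a + 2 * sqnorm I b"
proof -
  have "(a i - b i)\<^sup>2 \<le> 2 * (a i)\<^sup>2 + 2 * (b i)\<^sup>2" for i
    using sum_squares_ge_zero[of "a i + b i" 0] by (simp add: power2_eq_square algebra_simps)
  then have "(\<Sum>i\<in>I. (a i - b i)\<^sup>2) \<le> (\<Sum>i\<in>I. 2 * (a i)\<^sup>2 + 2 * (b i)\<^sup>2)"
    by (intro sum_mono)
  then show ?thesis unfolding sqnorm_def by (simp add: sum.distrib sum_distrib_left)
qed

lemma sqnorm_add_le: "sqnorm I (\<lambda>i. a i + b i) \<le> 2 * sqnorm I a + 2 * sqnorm I b"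
  using sqnorm_diff_le[of I a "\<lambda>i. - b i"] by (simp add: sqnorm_def)

lemma weighted_sum_sq_le:
  fixes c y :: "'x \<Rightarrow> real"
  shows "(\<Sum>x\<in>X. c x * y x)\<^sup>2 \<le> (\<Sum>x\<in>X. \<bar>c x\<bar>) * (\<Sum>x\<in>X. \<bar>c x\<bar> * (y x)\<^sup>2)"
proof -
  have "(\<Sum>x\<in>X. c x * y x)\<^sup>2 \<le> (\<Sum>x\<in>X. \<bar>c x\<bar> * \<bar>y x\<bar>)\<^sup>2"
    by (rule power2_le_iff_abs_le[THEN iffD2])
       (simp_all add: sum_nonneg order_trans[OF sum_abs] abs_mult)
  also have "\<dots> = (\<Sum>x\<in>X. sqrt \<bar>c x\<bar> * (sqrt \<bar>c x\<bar> * \<bar>y x\<bar>))\<^sup>2"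
    by (simp flip: mult.assoc)
  also have "\<dots> \<le> (\<Sum>x\<in>X. (sqrt \<bar>c x\<bar>)\<^sup>2) * (\<Sum>x\<in>X. (sqrt \<bar>c x\<bar> * \<bar>y x\<bar>)\<^sup>2)"
    by (rule Cauchy_Schwarz_ineq_sum)
  finally show ?thesis by (simp add: power_mult_distrib)
qed

lemma sqnorm_weighted_sum_le:
  fixes c :: "'x \<Rightarrow> real" and V :: "'x \<Rightarrow> 'i \<Rightarrow> real"
  shows "sqnorm I (\<lambda>i. \<Sum>x\<in>X. c x * V x i) \<le> (\<Sum>x\<in>X. \<bar>c x\<bar>) * (\<Sum>x\<in>X. \<bar>c x\<bar> * sqnorm I (V x))"
proof -
  have "sqnorm I (\<lambda>i. \<Sum>x\<in>X. c x * V x i) \<le> (\<Sum>i\<in>I. (\<Sum>x\<in>X. \<bar>c x\<bar>) * (\<Sum>x\<in>X. \<bar>c x\<bar> * (V x i)\<^sup>2))"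
    unfolding sqnorm_def by (intro sum_mono weighted_sum_sq_le)
  also have "\<dots> = (\<Sum>x\<in>X. \<bar>c x\<bar>) * (\<Sum>i\<in>I. \<Sum>x\<in>X. \<bar>c x\<bar> * (V x i)\<^sup>2)"
    by (simp add: sum_distrib_left)
  also have "\<dots> = (\<Sum>x\<in>X. \<bar>c x\<bar>) * (\<Sum>x\<in>X. \<bar>c x\<bar> * sqnorm I (V x))"
    unfolding sqnorm_def by (subst sum.swap) (simp add: sum_distrib_left)
  finally show ?thesis .
qed

lemma sqnorm_weighted_sum_bounded:
  fixes c :: "'x \<Rightarrow> real" and V :: "'x \<Rightarrow> 'i \<Rightarrow> real"
  assumes "\<And>x. x \<in> X \<Longrightarrow> sqnorm I (V x) \<le> M"
  shows "sqnorm I (\<lambda>i. \<Sum>x\<in>X. c x * V x i) \<le> (\<Sum>x\<in>X. \<bar>c x\<bar>)\<^sup>2 * M"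
proof -
  have "(\<Sum>x\<in>X. \<bar>c x\<bar>) * (\<Sum>x\<in>X. \<bar>c x\<bar> * sqnorm I (V x)) \<le> (\<Sum>x\<in>X. \<bar>c x\<bar>) * (\<Sum>x\<in>X. \<bar>c x\<bar> * M)"
    using assms by (intro mult_left_mono sum_mono) (auto simp: sum_nonneg mult_left_mono)
  also have "\<dots> = (\<Sum>x\<in>X. \<bar>c x\<bar>)\<^sup>2 * M"
    by (simp add: power2_eq_square flip: sum_distrib_right)
  finally show ?thesis using sqnorm_weighted_sum_le[of I c V X] by linarith
qed

lemma sum_half_pow_div_le:
  assumes "1 \<le> \<tau>"
  shows "(\<Sum>t<n. (1/2::real) ^ (t div \<tau>)) \<le> 2 * real \<tau>"
proof -
  have blocks: "(\<Sum>t<k * \<tau>. (1/2::real) ^ (t div \<tau>)) = real \<tau> * (\<Sum>j<k. (1/2)^j)" for k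
  proof (induction k)
    case (Suc k)
    have "(\<Sum>t\<in>{k * \<tau>..<k * \<tau> + \<tau>}. (1/2::real) ^ (t div \<tau>)) = (\<Sum>t\<in>{k * \<tau>..<k * \<tau> + \<tau>}. (1/2) ^ k)"
    proof (intro sum.cong refl)
      fix t assume "t \<in> {k * \<tau>..<k * \<tau> + \<tau>}"
      then have "t div \<tau> = k" by (intro div_nat_eqI) (simp_all add: mult.commute)
      then show "(1/2::real) ^ (t div \<tau>) = (1/2) ^ k" by simp
    qed
    then show ?case
      using Suc sum.atLeastLessThan_concat[of 0 "k * \<tau>" "k * \<tau> + \<tau>" "\<lambda>t. (1/2::real) ^ (t div \<tau>)"]
      by (simp add: lessThan_atLeast0 algebra_simps)
  qed simp
  have "(\<Sum>t<n. (1/2::real) ^ (t div \<tau>)) \<le> (\<Sum>t<n * \<tau>. (1/2::real) ^ (t div \<tau>))"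
    using assms by (intro sum_mono2) auto
  also have "\<dots> = real \<tau> * (\<Sum>j<n. (1/2)^j)" by (rule blocks)
  also have "(\<Sum>j<n. (1/2::real)^j) = 2 - 2 * (1/2)^n"
    by (induction n) auto
  finally have "(\<Sum>t<n. (1/2::real) ^ (t div \<tau>)) \<le> real \<tau> * (2 - 2 * (1/2)^n)" .
  moreover have "real \<tau> * (2 - 2 * (1/2)^n) \<le> 2 * real \<tau>" by (simp add: algebra_simps)
  ultimately show ?thesis by linarith
qed

lemma half_pow_div_le_Suc:
  assumes "1 \<le> \<tau>"
  shows "(1/2::real) ^ (k div \<tau>) \<le> 2 * (1/2) ^ (Suc k div \<tau>)"
proof -
  have "Suc k div \<tau> \<le> (k + \<tau>) div \<tau>" by (rule div_le_mono) (use assms in simp)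
  also have "\<dots> = k div \<tau> + 1" using assms by simp
  finally have "(1/2::real) ^ (k div \<tau> + 1) \<le> (1/2) ^ (Suc k div \<tau>)"
    by (rule power_decreasing) auto
  then show ?thesis by simp
qed

lemma sum_dist_index_le:
  fixes g :: "nat \<Rightarrow> real"
  assumes g: "\<And>k. 0 \<le> g k" and "t < N"
  shows "(\<Sum>u<N. g (if t \<le> u then u - t else t - u)) \<le> 2 * (\<Sum>k<N. g k)"
proof -
  have reindex: "(\<Sum>u\<in>A. g (f u)) \<le> (\<Sum>k<N. g k)" if "inj_on f A" "f ` A \<subseteq> {..<N}" for f A
  proof -
    have "(\<Sum>u\<in>A. g (f u)) = (\<Sum>k\<in>f ` A. g k)" using that(1) by (simp add: sum.reindex)
    also have "\<dots> \<le> (\<Sum>k<N. g k)" using that(2) g by (intro sum_mono2) auto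
    finally show ?thesis .
  qed
  have split: "{..<N} = ({..<N} \<inter> {..t}) \<union> ({..<N} \<inter> {t<..})" by auto
  have "(\<Sum>u<N. g (if t \<le> u then u - t else t - u))
      = (\<Sum>u\<in>{..<N} \<inter> {..t}. g (if t \<le> u then u - t else t - u))
        + (\<Sum>u\<in>{..<N} \<inter> {t<..}. g (if t \<le> u then u - t else t - u))"
    by (subst split, rule sum.union_disjoint) auto
  also have "\<dots> = (\<Sum>u\<in>{..<N} \<inter> {..t}. g (t - u)) + (\<Sum>u\<in>{..<N} \<inter> {t<..}. g (u - t))"
    by (intro arg_cong2[where f = "(+)"] sum.cong) auto
  also have "\<dots> \<le> (\<Sum>k<N. g k) + (\<Sum>k<N. g k)"
    using \<open>t < N\<close> by (intro add_mono reindex) (auto simp: inj_on_def)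
  finally show ?thesis by simp
qed

lemma pow2_le_iff_le_exponent:
  assumes "2 ^ J \<le> T" "T < 2 ^ Suc J"
  shows "(2::nat) ^ q \<le> T \<longleftrightarrow> q \<le> J"
proof
  assume "2 ^ q \<le> T"
  then have "(2::nat) ^ q < 2 ^ Suc J" using assms(2) by linarith
  then show "q \<le> J" using power_strict_increasing_iff[of "2::nat" q "Suc J"] by simp
next
  assume "q \<le> J"
  then show "2 ^ q \<le> T" using assms(1) power_increasing[of q J "2::nat"] by linarith
qed

lemma exponent_le_ln:
  assumes "2 ^ J \<le> T"
  shows "real J \<le> 2 * ln (real T)"
proof -
  have "1/2 \<le> ln (2::real)" using ln_le_minus_one[of "1/2::real"] by (simp add: ln_div)
  then have "real J / 2 \<le> real J * ln 2" using mult_left_mono[of "1/2" "ln 2" "real J"] by simp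
  also have "\<dots> = ln (2 ^ J)" by (simp add: ln_realpow)
  also have "\<dots> \<le> ln (real T)"
    using of_nat_mono[OF assms, where 'a = real] by (intro ln_mono) simp_all
  finally show ?thesis by simp
qed

lemma geometric_levels_le_ln:
  assumes "0 \<le> B" "1 \<le> \<tau>" "2 \<le> T" "2 ^ J \<le> T"
  shows "8 * B + real J * (384 * B * \<tau>) \<le> 784 * B * \<tau> * ln (real T)"
proof -
  have "1 * 1 \<le> \<tau> * (2 * ln (real T))"
    using assms exponent_le_ln[of 1 T] by (intro mult_mono) auto
  from mult_left_mono[OF this, of "8 * B"] have "8 * B \<le> 8 * B * (\<tau> * (2 * ln (real T)))"
    using assms(1) by simp
  moreover have "real J * (384 * B * \<tau>) \<le> 2 * ln (real T) * (384 * B * \<tau>)"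
    using exponent_le_ln[OF assms(4)] assms(1,2) by (intro mult_right_mono) auto
  ultimately show ?thesis by (simp add: algebra_simps)
qed

section \<open>Expectations along trajectories\<close>

definition last_state :: "nat \<Rightarrow> trans list \<Rightarrow> nat" where
  "last_state s zs = (if zs = [] then s else snd (snd (last zs)))"

lemma last_state_Cons: "last_state s ((a, b, c) # zs) = last_state c zs"
  unfolding last_state_def by simp

lemma last_state_in: "s \<in> S \<Longrightarrow> set zs \<subseteq> S \<times> Act \<times> S \<Longrightarrow> last_state s zs \<in> S"
  unfolding last_state_def using last_in_set by fastforce

locale markov_policy =
  fixes S Act :: "nat set" and P :: "nat \<Rightarrow> nat \<Rightarrow> nat \<Rightarrow> real" and \<pi> :: "nat \<Rightarrow> nat \<Rightarrow> real"
  assumes finite_S: "finite S" and kernel: "is_kernel S Act P" and policy: "is_policy S Act \<pi>"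
begin

lemma P_nonneg: "s \<in> S \<Longrightarrow> a \<in> Act \<Longrightarrow> s' \<in> S \<Longrightarrow> 0 \<le> P s a s'"
  using kernel by (auto simp: is_kernel_def)

lemma \<pi>_nonneg: "s \<in> S \<Longrightarrow> a \<in> Act \<Longrightarrow> 0 \<le> \<pi> s a"
  using policy by (auto simp: is_policy_def)

lemma \<pi>P_nonneg: "s \<in> S \<Longrightarrow> a \<in> Act \<Longrightarrow> s' \<in> S \<Longrightarrow> 0 \<le> \<pi> s a * P s a s'"
  by (simp add: P_nonneg \<pi>_nonneg)

lemma \<pi>P_sum: "s \<in> S \<Longrightarrow> (\<Sum>a\<in>Act. \<Sum>s'\<in>S. \<pi> s a * P s a s') = 1"
  using kernel policy by (simp add: is_kernel_def is_policy_def flip: sum_distrib_left)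

end

sublocale markov_policy \<subseteq> stochastic_matrix S "Ppi Act P \<pi>"
proof
  show "finite S" by (rule finite_S)
  show "0 \<le> Ppi Act P \<pi> s s'" if "s \<in> S" "s' \<in> S" for s s'
    unfolding Ppi_def using that by (intro sum_nonneg) (simp add: \<pi>P_nonneg)
  show "(\<Sum>s'\<in>S. Ppi Act P \<pi> s s') = 1" if "s \<in> S" for s
    unfolding Ppi_def using \<pi>P_sum[OF that] by (subst sum.swap) simp
qed

context markov_policy
begin

abbreviation "E \<equiv> traj_exp S Act P \<pi>"

definition step_exp :: "(trans \<Rightarrow> real) \<Rightarrow> nat \<Rightarrow> real" where
  "step_exp f u = (\<Sum>a\<in>Act. \<Sum>s'\<in>S. \<pi> u a * P u a s' * f (u, a, s'))"

lemma step_exp_cong: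
  "(\<And>a s'. a \<in> Act \<Longrightarrow> s' \<in> S \<Longrightarrow> f (u, a, s') = g (u, a, s')) \<Longrightarrow> step_exp f u = step_exp g u"
  unfolding step_exp_def by simp

lemma step_exp_const: "s \<in> S \<Longrightarrow> step_exp (\<lambda>_. c) s = c"
  unfolding step_exp_def using \<pi>P_sum by (simp flip: sum_distrib_right)

lemma step_exp_diff: "step_exp (\<lambda>z. f z - g z) s = step_exp f s - step_exp g s"
  unfolding step_exp_def by (simp add: right_diff_distrib sum_subtractf)

lemma step_exp_sum: "step_exp (\<lambda>z. \<Sum>i\<in>J. f i z) s = (\<Sum>i\<in>J. step_exp (f i) s)"
  unfolding step_exp_def by (simp add: sum_distrib_left sum.swap[of _ J])

lemma step_exp_abs_le:
  assumes "s \<in> S" and "\<And>a s'. a \<in> Act \<Longrightarrow> s' \<in> S \<Longrightarrow> \<bar>f (s, a, s')\<bar> \<le> M"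
  shows "\<bar>step_exp f s\<bar> \<le> M"
proof -
  have "\<bar>step_exp f s\<bar> \<le> (\<Sum>a\<in>Act. \<Sum>s'\<in>S. \<pi> s a * P s a s' * M)"
    unfolding step_exp_def
    by (rule order_trans[OF sum_abs], rule sum_mono, rule order_trans[OF sum_abs], rule sum_mono)
       (simp add: abs_mult P_nonneg \<pi>_nonneg assms mult_left_mono)
  also have "\<dots> = M" using \<pi>P_sum[OF assms(1)] by (simp flip: sum_distrib_right)
  finally show ?thesis .
qed

lemma statE_eq: "statE S Act P \<pi> f = (\<Sum>u\<in>S. stat_dist S (Ppi Act P \<pi>) u * step_exp f u)"
  unfolding statE_def step_exp_def Let_def by (simp add: sum_distrib_left mult.assoc)

lemma Kpow_weighted_abs_le:
  assumes "s \<in> S" and "\<And>v. v \<in> S \<Longrightarrow> \<bar>g v\<bar> \<le> M"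
  shows "\<bar>\<Sum>v\<in>S. Kpow t s v * g v\<bar> \<le> M"
proof -
  have "\<bar>\<Sum>v\<in>S. Kpow t s v * g v\<bar> \<le> (\<Sum>v\<in>S. Kpow t s v * M)"
    by (rule order_trans[OF sum_abs], rule sum_mono)
       (simp add: abs_mult Kpow_nonneg assms mult_left_mono del: mpow.simps)
  also have "\<dots> = M" using Kpow_row_sum[OF assms(1)] by (simp flip: sum_distrib_right del: mpow.simps)
  finally show ?thesis .
qed

lemma E_cong:
  "s \<in> S \<Longrightarrow> (\<And>zs. length zs = n \<Longrightarrow> set zs \<subseteq> S \<times> Act \<times> S \<Longrightarrow> F zs = G zs) \<Longrightarrow> E n s F = E n s G"
proof (induction n arbitrary: s F G)
  case (Suc n)
  show ?case unfolding traj_exp.simps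
    by (intro sum.cong refl arg_cong2[where f = "(*)"] Suc.IH) (use Suc.prems in auto)
qed simp

lemma E_mono:
  "s \<in> S \<Longrightarrow> (\<And>zs. length zs = n \<Longrightarrow> set zs \<subseteq> S \<times> Act \<times> S \<Longrightarrow> F zs \<le> G zs) \<Longrightarrow> E n s F \<le> E n s G"
proof (induction n arbitrary: s F G)
  case (Suc n)
  show ?case unfolding traj_exp.simps
    by (intro sum_mono mult_left_mono Suc.IH) (use Suc.prems in \<open>auto simp: \<pi>P_nonneg\<close>)
qed simp

lemma E_const: "s \<in> S \<Longrightarrow> E n s (\<lambda>_. c) = c"
proof (induction n arbitrary: s)
  case (Suc n)
  then show ?case using \<pi>P_sum[OF Suc.prems] by (simp flip: sum_distrib_right cong: sum.cong)
qed simp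

lemma E_add: "E n s (\<lambda>zs. F zs + G zs) = E n s F + E n s G"
  by (induction n arbitrary: s F G) (simp_all add: distrib_left sum.distrib)

lemma E_scale: "E n s (\<lambda>zs. c * F zs) = c * E n s F"
  by (induction n arbitrary: s F) (simp_all add: sum_distrib_left mult.left_commute)

lemma E_zero: "E n s (\<lambda>_. 0) = 0"
  using E_scale[of n s 0 "\<lambda>_. 0"] by simp

lemma E_diff: "E n s (\<lambda>zs. F zs - G zs) = E n s F - E n s G"
  using E_add[of n s F "\<lambda>zs. (-1) * G zs"] E_scale[of n s "-1" G] by simp

lemma E_sum: "E n s (\<lambda>zs. \<Sum>t\<in>T. F t zs) = (\<Sum>t\<in>T. E n s (F t))"
  by (induction T rule: infinite_finite_induct) (simp_all add: E_zero E_add)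

lemma E_nonneg: "s \<in> S \<Longrightarrow> (\<And>zs. 0 \<le> F zs) \<Longrightarrow> 0 \<le> E n s F"
  using E_mono[of s n "\<lambda>_. 0" F] by (simp add: E_const)

lemma E_append: "E (k + n) s F = E k s (\<lambda>ys. E n (last_state s ys) (\<lambda>zs. F (ys @ zs)))"
proof (induction k arbitrary: s F)
  case 0 show ?case by (simp add: last_state_def)
next
  case (Suc k) show ?case by (simp add: Suc.IH last_state_Cons)
qed

lemma E_nth: "s \<in> S \<Longrightarrow> t < n \<Longrightarrow> E n s (\<lambda>zs. f (zs ! t)) = (\<Sum>u\<in>S. Kpow t s u * step_exp f u)"
proof (induction t arbitrary: s n)
  case 0
  then obtain n' where "n = Suc n'" by (cases n) auto
  then have "E n s (\<lambda>zs. f (zs ! 0)) = step_exp f s"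
    by (simp add: E_const step_exp_def cong: sum.cong)
  also have "\<dots> = (\<Sum>u\<in>S. if s = u then step_exp f u else 0)"
    using finite_S 0 by simp
  also have "\<dots> = (\<Sum>u\<in>S. Kpow 0 s u * step_exp f u)"
    by (intro sum.cong) auto
  finally show ?case .
next
  case (Suc t)
  then obtain n' where n: "n = Suc n'" and "t < n'" by (cases n) auto
  then have "E n s (\<lambda>zs. f (zs ! Suc t)) =
      (\<Sum>a\<in>Act. \<Sum>s'\<in>S. \<pi> s a * P s a s' * (\<Sum>u\<in>S. Kpow t s' u * step_exp f u))"
    by (simp add: Suc.IH cong: sum.cong)
  also have "\<dots> = (\<Sum>s'\<in>S. \<Sum>a\<in>Act. \<pi> s a * P s a s' * (\<Sum>u\<in>S. Kpow t s' u * step_exp f u))"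
    by (rule sum.swap)
  also have "\<dots> = (\<Sum>s'\<in>S. Ppi Act P \<pi> s s' * (\<Sum>u\<in>S. Kpow t s' u * step_exp f u))"
    unfolding Ppi_def by (simp add: sum_distrib_right)
  also have "\<dots> = (\<Sum>s'\<in>S. \<Sum>u\<in>S. Ppi Act P \<pi> s s' * Kpow t s' u * step_exp f u)"
    by (simp add: sum_distrib_left mult.assoc)
  also have "\<dots> = (\<Sum>u\<in>S. \<Sum>s'\<in>S. Ppi Act P \<pi> s s' * Kpow t s' u * step_exp f u)"
    by (rule sum.swap)
  also have "\<dots> = (\<Sum>u\<in>S. Kpow (Suc t) s u * step_exp f u)"
    using Suc.prems(1) by (intro sum.cong refl) (simp add: Kpow_Suc_left sum_distrib_right del: mpow.simps)
  finally show ?case .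
qed

lemma E_nth_pair:
  assumes "s \<in> S" "t < u" "u < n"
  shows "E n s (\<lambda>zs. f (zs ! t) * g (zs ! u)) =
    (\<Sum>v\<in>S. Kpow t s v * step_exp (\<lambda>z. f z * (\<Sum>x\<in>S. Kpow (u - Suc t) (snd (snd z)) x * step_exp g x)) v)"
proof -
  define h where "h w = (\<Sum>x\<in>S. Kpow (u - Suc t) w x * step_exp g x)" for w
  txt \<open>Condition on the first \<open>t + 1\<close> transitions: the rest of the trajectory starts at the target of \<open>z\<^sub>t\<close>.\<close>
  have "E n s (\<lambda>zs. f (zs ! t) * g (zs ! u)) =
      E (Suc t) s (\<lambda>ys. E (n - Suc t) (last_state s ys) (\<lambda>zs. f ((ys @ zs) ! t) * g ((ys @ zs) ! u)))"
    using E_append[of "Suc t" "n - Suc t"] assms by simp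
  also have "\<dots> = E (Suc t) s (\<lambda>ys. f (ys ! t) * h (snd (snd (ys ! t))))"
  proof (rule E_cong[OF \<open>s \<in> S\<close>])
    fix ys assume len: "length ys = Suc t" and "set ys \<subseteq> S \<times> Act \<times> S"
    then have ls: "last_state s ys \<in> S" using last_state_in \<open>s \<in> S\<close> by blast
    have ls_eq: "last_state s ys = snd (snd (ys ! t))"
      using len unfolding last_state_def by (auto simp: last_conv_nth)
    have "E (n - Suc t) (last_state s ys) (\<lambda>zs. f ((ys @ zs) ! t) * g ((ys @ zs) ! u))
        = E (n - Suc t) (last_state s ys) (\<lambda>zs. f (ys ! t) * g (zs ! (u - Suc t)))"
      using len assms by (intro E_cong[OF ls]) (simp add: nth_append)
    also have "\<dots> = f (ys ! t) * h (last_state s ys)"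
      unfolding E_scale h_def using assms by (subst E_nth[OF ls]) auto
    finally show "E (n - Suc t) (last_state s ys) (\<lambda>zs. f ((ys @ zs) ! t) * g ((ys @ zs) ! u)) =
        f (ys ! t) * h (snd (snd (ys ! t)))" unfolding ls_eq .
  qed
  also have "\<dots> = (\<Sum>v\<in>S. Kpow t s v * step_exp (\<lambda>z. f z * h (snd (snd z))) v)"
    by (rule E_nth[OF \<open>s \<in> S\<close>]) simp
  finally show ?thesis unfolding h_def .
qed

end

section \<open>Geometric mixing\<close>

locale mixing_chain = stochastic_matrix +
  fixes \<tau> :: nat
  assumes stationary_stat_dist: "stationary S K (stat_dist S K)"
    and mixing_time_pos: "1 \<le> \<tau>"
    and mixing: "s \<in> S \<Longrightarrow> l1_norm S (\<lambda>y. Kpow \<tau> s y - stat_dist S K y) \<le> 1/2"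
begin

abbreviation "d \<equiv> stat_dist S K"

definition dist_stat :: "nat \<Rightarrow> nat \<Rightarrow> real" where
  "dist_stat t s = l1_norm S (\<lambda>y. Kpow t s y - d y)"

lemma mixing_geometric_contraction: "geometric_contraction \<tau> (1/2)"
proof -
  have "l1_norm S (vec_mat S v (Kpow \<tau>)) \<le> 1/2 * l1_norm S v" if "(\<Sum>x\<in>S. v x) = 0" for v
    by (rule l1_norm_vec_mat_zero_sum_le[OF finite_S that, where D = d])
       (use mixing in \<open>simp add: l1_norm_def\<close>)
  then show ?thesis
    unfolding geometric_contraction_def using mixing_time_pos l1_norm_vec_mat_Kpow_geometric[of \<tau> "1/2"]
    by auto
qed

lemma dist_stat_nonneg: "0 \<le> dist_stat t s"
  unfolding dist_stat_def by (rule l1_norm_nonneg)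

lemma dist_stat_le: "s \<in> S \<Longrightarrow> dist_stat t s \<le> 2 * (1/2) ^ (t div \<tau>)"
  using geometric_contraction_row_dist[OF mixing_geometric_contraction, of s d t]
    stationary_vec_mat_Kpow[OF stationary_stat_dist] stationary_nonneg[OF stationary_stat_dist]
    stationary_sum[OF stationary_stat_dist]
  unfolding dist_stat_def by (simp cong: l1_norm_cong del: mpow.simps)

lemma dist_stat_le_2: "s \<in> S \<Longrightarrow> dist_stat t s \<le> 2"
  using dist_stat_le[of s t] by (simp add: power_le_one order_trans)

lemma sum_dist_stat_le: "s \<in> S \<Longrightarrow> (\<Sum>t<n. dist_stat t s) \<le> 4 * real \<tau>"
proof -
  assume "s \<in> S"
  then have "(\<Sum>t<n. dist_stat t s) \<le> 2 * (\<Sum>t<n. (1/2) ^ (t div \<tau>))"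
    by (simp add: sum_mono dist_stat_le sum_distrib_left)
  also have "\<dots> \<le> 4 * real \<tau>" using sum_half_pow_div_le[OF mixing_time_pos, of n] by simp
  finally show ?thesis .
qed

end

lemma (in stochastic_matrix) mixing_chain_mix_time:
  assumes "irreducible S K" "aperiodic S K" "S \<noteq> {}"
  shows "mixing_chain S K (mix_time S K)"
proof -
  obtain N \<rho> where "geometric_contraction N \<rho>"
    using irreducible_aperiodic_geometric_contraction[OF assms] by blast
  from stat_dist_stationary[OF this assms(3)] mix_time_bound[OF this assms(3)]
  show ?thesis by unfold_locales auto
qed

section \<open>The multilevel Monte Carlo estimator\<close>

locale mlmc_estimator = markov_policy S Act P \<pi> + mixing_chain S "Ppi Act P \<pi>" \<tau>
  for S Act P \<pi> \<tau> +
  fixes X :: "trans \<Rightarrow> 'i \<Rightarrow> real" and I :: "'i set" and B :: real and s0 :: nat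
  assumes X_bound: "z \<in> S \<times> Act \<times> S \<Longrightarrow> sqnorm I (X z) \<le> B"
    and s0: "s0 \<in> S"
begin

definition mean :: "'i \<Rightarrow> real" where
  "mean i = statE S Act P \<pi> (\<lambda>z. X z i)"

definition mean_from :: "nat \<Rightarrow> 'i \<Rightarrow> real" where
  "mean_from u i = step_exp (\<lambda>z. X z i) u"

definition centred :: "trans \<Rightarrow> 'i \<Rightarrow> real" where
  "centred z i = X z i - mean i"

text \<open>The mean of the level-\<open>j\<close> average \<open>X\<^sup>j\<close> over trajectories from \<open>s0\<close>.\<close>

definition level_mean :: "nat \<Rightarrow> 'i \<Rightarrow> real" where
  "level_mean j i = (\<Sum>t<2^j. \<Sum>u\<in>S. Kpow t s0 u * mean_from u i) / 2^j"

lemma B_nonneg: "0 \<le> B"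
proof -
  obtain a where "a \<in> Act" using \<pi>P_sum[OF s0] by fastforce
  then show ?thesis using X_bound[of "(s0, a, s0)"] s0 sqnorm_nonneg order_trans by blast
qed

lemma sqnorm_mean_from_le: "u \<in> S \<Longrightarrow> sqnorm I (mean_from u) \<le> B"
proof -
  assume u: "u \<in> S"
  have "sqnorm I (\<lambda>i. \<Sum>s'\<in>S. P u a s' * X (u, a, s') i) \<le> B" if a: "a \<in> Act" for a
    using sqnorm_weighted_sum_bounded[of S I "\<lambda>s' i. X (u, a, s') i" B "P u a"] X_bound u a
      kernel P_nonneg
    by (simp add: is_kernel_def)
  then have "sqnorm I (\<lambda>i. \<Sum>a\<in>Act. \<pi> u a * (\<Sum>s'\<in>S. P u a s' * X (u, a, s') i)) \<le> (\<Sum>a\<in>Act. \<bar>\<pi> u a\<bar>)\<^sup>2 * B"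
    by (rule sqnorm_weighted_sum_bounded)
  moreover have "(\<Sum>a\<in>Act. \<bar>\<pi> u a\<bar>) = 1"
    using policy u \<pi>_nonneg by (simp add: is_policy_def)
  ultimately show ?thesis
    unfolding mean_from_def step_exp_def by (simp add: sum_distrib_left mult.assoc)
qed

lemma mean_eq: "mean i = (\<Sum>u\<in>S. d u * mean_from u i)"
  unfolding mean_def mean_from_def by (rule statE_eq)

lemma sqnorm_mean_le: "sqnorm I mean \<le> B"
proof -
  have "sqnorm I (\<lambda>i. \<Sum>u\<in>S. d u * mean_from u i) \<le> (\<Sum>u\<in>S. \<bar>d u\<bar>)\<^sup>2 * B"
    by (rule sqnorm_weighted_sum_bounded) (rule sqnorm_mean_from_le)
  moreover have "(\<Sum>u\<in>S. \<bar>d u\<bar>) = 1"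
    using stationary_sum[OF stationary_stat_dist] stationary_nonneg[OF stationary_stat_dist] by simp
  ultimately show ?thesis by (simp add: mean_eq[abs_def])
qed

lemma sqnorm_centred_le: "z \<in> S \<times> Act \<times> S \<Longrightarrow> sqnorm I (centred z) \<le> 4 * B"
  using sqnorm_diff_le[of I "X z" mean] X_bound[of z] sqnorm_mean_le
  unfolding centred_def by simp

lemma sqnorm_Kpow_mean_from_le:
  "w \<in> S \<Longrightarrow> sqnorm I (\<lambda>i. \<Sum>x\<in>S. (Kpow k w x - d x) * mean_from x i) \<le> (dist_stat k w)\<^sup>2 * B"
  unfolding dist_stat_def l1_norm_def by (rule sqnorm_weighted_sum_bounded) (rule sqnorm_mean_from_le)

lemma Kpow_step_exp_centred:
  assumes "w \<in> S"
  shows "(\<Sum>x\<in>S. Kpow k w x * step_exp (\<lambda>z. centred z i) x) = (\<Sum>x\<in>S. (Kpow k w x - d x) * mean_from x i)"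
proof -
  have "(\<Sum>x\<in>S. Kpow k w x * step_exp (\<lambda>z. centred z i) x)
      = (\<Sum>x\<in>S. Kpow k w x * mean_from x i) - (\<Sum>x\<in>S. Kpow k w x) * mean i"
    unfolding centred_def mean_from_def
    by (simp add: step_exp_diff step_exp_const right_diff_distrib sum_subtractf sum_distrib_right
        del: mpow.simps)
  also have "\<dots> = (\<Sum>x\<in>S. Kpow k w x * mean_from x i) - (\<Sum>x\<in>S. d x * mean_from x i)"
    by (simp add: Kpow_row_sum assms mean_eq del: mpow.simps)
  finally show ?thesis by (simp add: left_diff_distrib sum_subtractf)
qed

lemma centred_inner_Kpow_mean_from_le:
  assumes "z \<in> S \<times> Act \<times> S" "w \<in> S"
  shows "\<bar>\<Sum>i\<in>I. centred z i * (\<Sum>x\<in>S. (Kpow k w x - d x) * mean_from x i)\<bar> \<le> 4 * B * (1/2) ^ (k div \<tau>)"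
proof -
  let ?\<beta> = "\<lambda>i. \<Sum>x\<in>S. (Kpow k w x - d x) * mean_from x i"
  have "(\<Sum>i\<in>I. centred z i * ?\<beta> i)\<^sup>2 \<le> sqnorm I (centred z) * sqnorm I ?\<beta>"
    unfolding sqnorm_def by (rule Cauchy_Schwarz_ineq_sum)
  also have "\<dots> \<le> (4 * B) * ((dist_stat k w)\<^sup>2 * B)"
    using sqnorm_centred_le[OF assms(1)] sqnorm_Kpow_mean_from_le[OF assms(2), of k] sqnorm_nonneg B_nonneg
    by (intro mult_mono) auto
  also have "\<dots> = (2 * B * dist_stat k w)\<^sup>2" by (simp add: power2_eq_square)
  finally have "\<bar>\<Sum>i\<in>I. centred z i * ?\<beta> i\<bar> \<le> 2 * B * dist_stat k w"
    using B_nonneg dist_stat_nonneg by (simp add: power2_le_iff_abs_le)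
  also have "\<dots> \<le> 2 * B * (2 * (1/2) ^ (k div \<tau>))"
    using dist_stat_le[OF assms(2)] B_nonneg by (intro mult_left_mono) auto
  finally show ?thesis by simp
qed

abbreviation centred_corr :: "nat \<Rightarrow> nat \<Rightarrow> nat \<Rightarrow> real" where
  "centred_corr n t u \<equiv> E n s0 (\<lambda>zs. \<Sum>i\<in>I. centred (zs ! t) i * centred (zs ! u) i)"

lemma centred_corr_less:
  assumes "t < u" "u < n"
  shows "\<bar>centred_corr n t u\<bar> \<le> 8 * B * (1/2) ^ ((u - t) div \<tau>)"
proof -
  let ?k = "u - Suc t"
  define \<beta> where "\<beta> w i = (\<Sum>x\<in>S. (Kpow ?k w x - d x) * mean_from x i)" for w i
  have "centred_corr n t u = (\<Sum>i\<in>I. E n s0 (\<lambda>zs. centred (zs ! t) i * centred (zs ! u) i))"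
    by (rule E_sum)
  also have "\<dots> = (\<Sum>i\<in>I. \<Sum>v\<in>S. Kpow t s0 v * step_exp (\<lambda>z. centred z i * \<beta> (snd (snd z)) i) v)"
  proof (intro sum.cong refl)
    fix i
    have "E n s0 (\<lambda>zs. centred (zs ! t) i * centred (zs ! u) i) = (\<Sum>v\<in>S. Kpow t s0 v *
        step_exp (\<lambda>z. centred z i * (\<Sum>x\<in>S. Kpow ?k (snd (snd z)) x * step_exp (\<lambda>z. centred z i) x)) v)"
      by (rule E_nth_pair[OF s0 assms])
    also have "\<dots> = (\<Sum>v\<in>S. Kpow t s0 v * step_exp (\<lambda>z. centred z i * \<beta> (snd (snd z)) i) v)"
      by (intro sum.cong refl arg_cong2[where f = "(*)"] step_exp_cong)
         (simp add: \<beta>_def Kpow_step_exp_centred del: mpow.simps)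
    finally show "E n s0 (\<lambda>zs. centred (zs ! t) i * centred (zs ! u) i) =
        (\<Sum>v\<in>S. Kpow t s0 v * step_exp (\<lambda>z. centred z i * \<beta> (snd (snd z)) i) v)" .
  qed
  also have "\<dots> = (\<Sum>v\<in>S. \<Sum>i\<in>I. Kpow t s0 v * step_exp (\<lambda>z. centred z i * \<beta> (snd (snd z)) i) v)"
    by (rule sum.swap)
  also have "\<dots> = (\<Sum>v\<in>S. Kpow t s0 v * step_exp (\<lambda>z. \<Sum>i\<in>I. centred z i * \<beta> (snd (snd z)) i) v)"
    by (simp only: step_exp_sum sum_distrib_left)
  also have "\<bar>\<dots>\<bar> \<le> 4 * B * (1/2) ^ (?k div \<tau>)"
    unfolding \<beta>_def by (intro Kpow_weighted_abs_le[OF s0] step_exp_abs_le centred_inner_Kpow_mean_from_le) auto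
  also have "\<dots> \<le> 4 * B * (2 * (1/2) ^ (Suc ?k div \<tau>))"
    using B_nonneg by (intro mult_left_mono half_pow_div_le_Suc mixing_time_pos) auto
  finally show ?thesis using assms by (simp add: Suc_diff_Suc)
qed

lemma centred_corr_diag: "t < n \<Longrightarrow> centred_corr n t t \<le> 4 * B"
proof -
  assume "t < n"
  have "centred_corr n t t \<le> E n s0 (\<lambda>_. 4 * B)"
  proof (rule E_mono[OF s0])
    fix zs :: "trans list" assume "length zs = n" "set zs \<subseteq> S \<times> Act \<times> S"
    then have "zs ! t \<in> S \<times> Act \<times> S" using \<open>t < n\<close> nth_mem by blast
    then show "(\<Sum>i\<in>I. centred (zs ! t) i * centred (zs ! t) i) \<le> 4 * B"
      using sqnorm_centred_le unfolding sqnorm_def by (simp add: power2_eq_square)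
  qed
  then show ?thesis by (simp add: E_const[OF s0])
qed

lemma centred_corr_le:
  assumes "t < n" "u < n"
  shows "centred_corr n t u \<le> 8 * B * (1/2) ^ ((if t \<le> u then u - t else t - u) div \<tau>)"
proof -
  consider "t < u" | "t = u" | "u < t" by arith
  then show ?thesis
  proof cases
    case 1 then show ?thesis using centred_corr_less[OF 1 assms(2)] by simp
  next
    case 2 then show ?thesis using centred_corr_diag[OF assms(1)] B_nonneg by simp
  next
    case 3 then show ?thesis using centred_corr_less[OF 3 assms(1)] by (simp add: mult.commute)
  qed
qed

lemma level_minus_mean: "lvl (\<lambda>z. X z i) zs j - mean i = (\<Sum>t<2^j. centred (zs ! t) i) / 2^j"
  unfolding lvl_def centred_def by (simp add: sum_subtractf field_simps)

lemma level_variance: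
  assumes "2^j \<le> n"
  shows "E n s0 (\<lambda>zs. sqnorm I (\<lambda>i. lvl (\<lambda>z. X z i) zs j - mean i)) \<le> 32 * B * real \<tau> / 2^j"
proof -
  define N :: nat where "N = 2^j"
  have sq: "sqnorm I (\<lambda>i. lvl (\<lambda>z. X z i) zs j - mean i) =
      (\<Sum>t<N. \<Sum>u<N. \<Sum>i\<in>I. centred (zs ! t) i * centred (zs ! u) i) / (real N)\<^sup>2" for zs
  proof -
    have "sqnorm I (\<lambda>i. lvl (\<lambda>z. X z i) zs j - mean i) =
        (\<Sum>i\<in>I. \<Sum>t<N. \<Sum>u<N. centred (zs ! t) i * centred (zs ! u) i) / (real N)\<^sup>2"
      unfolding sqnorm_def level_minus_mean N_def
      by (simp add: power_divide power2_eq_square sum_product sum_divide_distrib)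
    also have "(\<Sum>i\<in>I. \<Sum>t<N. \<Sum>u<N. centred (zs ! t) i * centred (zs ! u) i)
        = (\<Sum>t<N. \<Sum>u<N. \<Sum>i\<in>I. centred (zs ! t) i * centred (zs ! u) i)"
      by (subst sum.swap) (rule sum.cong[OF refl], rule sum.swap)
    finally show ?thesis .
  qed
  have "E n s0 (\<lambda>zs. sqnorm I (\<lambda>i. lvl (\<lambda>z. X z i) zs j - mean i)) =
      (\<Sum>t<N. \<Sum>u<N. centred_corr n t u) / (real N)\<^sup>2"
    unfolding sq divide_inverse mult.commute[of _ "inverse _"] by (simp only: E_scale E_sum)
  also have "\<dots> \<le> (\<Sum>t<N. \<Sum>u<N. 8 * B * (1/2) ^ ((if t \<le> u then u - t else t - u) div \<tau>)) / (real N)\<^sup>2"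
    using assms unfolding N_def by (intro divide_right_mono sum_mono centred_corr_le) auto
  also have "\<dots> \<le> (\<Sum>t<N. 2 * (\<Sum>k<N. 8 * B * (1/2) ^ (k div \<tau>))) / (real N)\<^sup>2"
    using B_nonneg by (intro divide_right_mono sum_mono sum_dist_index_le) auto
  also have "\<dots> = 16 * B * N * (\<Sum>k<N. (1/2) ^ (k div \<tau>)) / (real N)\<^sup>2"
    by (simp add: sum_distrib_left mult_ac)
  also have "\<dots> \<le> 16 * B * N * (2 * real \<tau>) / (real N)\<^sup>2"
    using B_nonneg by (intro divide_right_mono mult_left_mono sum_half_pow_div_le mixing_time_pos) auto
  also have "\<dots> = 32 * B * real \<tau> / N"
    unfolding N_def by (simp add: power2_eq_square)
  finally show ?thesis unfolding N_def by simp
qed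

lemma E_level:
  assumes "2^j \<le> n"
  shows "E n s0 (\<lambda>zs. lvl (\<lambda>z. X z i) zs j) = level_mean j i"
proof -
  have "E n s0 (\<lambda>zs. lvl (\<lambda>z. X z i) zs j) = (\<Sum>t<2^j. E n s0 (\<lambda>zs. X (zs ! t) i)) / 2^j"
    unfolding lvl_def divide_inverse mult.commute[of _ "inverse _"] by (simp only: E_scale E_sum)
  also have "\<dots> = level_mean j i"
    unfolding level_mean_def mean_from_def using assms
    by (intro arg_cong2[where f = "(/)"] sum.cong refl) (auto intro!: E_nth[OF s0])
  finally show ?thesis .
qed

lemma level_mean_bias: "sqnorm I (\<lambda>i. level_mean j i - mean i) \<le> 8 * B * real \<tau> / 2^j"
proof -
  define N :: nat where "N = 2^j"
  define D where "D t i = (\<Sum>u\<in>S. (Kpow t s0 u - d u) * mean_from u i)" for t i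
  have "level_mean j i - mean i = (\<Sum>t<N. (1 / N) * D t i)" for i
    unfolding level_mean_def D_def N_def mean_eq
    by (simp add: left_diff_distrib sum_subtractf sum_divide_distrib[symmetric] field_simps del: mpow.simps)
  then have "sqnorm I (\<lambda>i. level_mean j i - mean i) = sqnorm I (\<lambda>i. \<Sum>t<N. (1 / N) * D t i)"
    by simp
  also have "\<dots> \<le> (\<Sum>t<N. \<bar>1 / real N\<bar>) * (\<Sum>t<N. \<bar>1 / real N\<bar> * sqnorm I (D t))"
    by (rule sqnorm_weighted_sum_le)
  also have "\<dots> = (\<Sum>t<N. sqnorm I (D t)) / N"
    unfolding N_def by (simp add: sum_divide_distrib)
  also have "\<dots> \<le> (\<Sum>t<N. 2 * B * dist_stat t s0) / N"
  proof (intro divide_right_mono sum_mono)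
    fix t
    have "sqnorm I (D t) \<le> (dist_stat t s0)\<^sup>2 * B"
      unfolding D_def by (rule sqnorm_Kpow_mean_from_le[OF s0])
    also have "\<dots> \<le> (2 * dist_stat t s0) * B"
      using dist_stat_le_2[OF s0, of t] dist_stat_nonneg[of t s0] B_nonneg
      by (intro mult_right_mono) (auto simp: power2_eq_square intro: mult_right_mono)
    finally show "sqnorm I (D t) \<le> 2 * B * dist_stat t s0" by (simp add: mult_ac)
  qed simp
  also have "\<dots> = 2 * B * (\<Sum>t<N. dist_stat t s0) / N"
    by (simp add: sum_distrib_left)
  also have "\<dots> \<le> 2 * B * (4 * real \<tau>) / N"
    using B_nonneg sum_dist_stat_le[OF s0, of N] by (intro divide_right_mono mult_left_mono) auto
  finally show ?thesis unfolding N_def by simp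
qed

lemma mlmc_exp_mlmc:
  assumes J: "2 ^ J \<le> T" "T < 2 ^ Suc J"
  shows "mlmc_exp S Act P \<pi> s0 (mlmc (\<lambda>z. X z i) T) = level_mean J i"
proof -
  txt \<open>The level differences, weighted by \<open>2\<^sup>q P(Q = q) = 1\<close>, telescope up to level \<open>J\<close>.\<close>
  have weighted_term: "(1/2)^(Suc k) * E (2^Suc k) s0 (mlmc (\<lambda>z. X z i) T (Suc k)) =
      (1/2)^(Suc k) * level_mean 0 i + (if k \<in> {..<J} then level_mean (Suc k) i - level_mean k i else 0)" for k
  proof -
    have "E (2^Suc k) s0 (mlmc (\<lambda>z. X z i) T (Suc k)) = level_mean 0 i +
        (if 2^Suc k \<le> T then 2^Suc k * (level_mean (Suc k) i - level_mean k i) else 0)"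
      unfolding mlmc_def
      by (cases "2^Suc k \<le> T") (simp_all add: E_add E_scale E_diff E_zero E_level power_increasing del: power_Suc)
    moreover have "(2::nat)^Suc k \<le> T \<longleftrightarrow> k \<in> {..<J}" using pow2_le_iff_le_exponent[OF J, of "Suc k"] by auto
    ultimately show ?thesis
      by (simp add: distrib_left mult.assoc[symmetric] flip: power_mult_distrib del: power_Suc)
  qed
  have "(\<lambda>k. (1/2)^(Suc k) * E (2^Suc k) s0 (mlmc (\<lambda>z. X z i) T (Suc k))) sums
      (1 * level_mean 0 i + (\<Sum>k<J. level_mean (Suc k) i - level_mean k i))"
    unfolding weighted_term
    by (intro sums_add sums_mult2 power_half_series sums_If_finite_set) simp
  also have "1 * level_mean 0 i + (\<Sum>k<J. level_mean (Suc k) i - level_mean k i) = level_mean J i"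
    using sum_lessThan_telescope[of "\<lambda>k. level_mean k i" J] by simp
  finally show ?thesis unfolding mlmc_exp_def by (rule sums_unique[symmetric])
qed

lemma mlmc_bias:
  assumes "2 \<le> T"
  shows "sqnorm I (\<lambda>i. mlmc_exp S Act P \<pi> s0 (mlmc (\<lambda>z. X z i) T) - mean i) \<le> 16 * B * real \<tau> / real T"
proof -
  obtain J where J: "2^J \<le> T" "T < 2^Suc J" using ex_power_ivl1[of 2 T] assms by auto
  have "sqnorm I (\<lambda>i. mlmc_exp S Act P \<pi> s0 (mlmc (\<lambda>z. X z i) T) - mean i) \<le> 8 * B * real \<tau> / 2^J"
    using level_mean_bias[of J] by (simp add: mlmc_exp_mlmc[OF J])
  also have "\<dots> \<le> 16 * B * real \<tau> / real T"
  proof -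
    have "real T \<le> real (2 * 2^J)" using J(2) by (intro of_nat_mono) simp
    then have "real T \<le> 2 * 2^J" by simp
    then have "1 / 2^J \<le> 2 / real T" using assms by (simp add: field_simps)
    from mult_left_mono[OF this, of "8 * B * real \<tau>"] B_nonneg show ?thesis by simp
  qed
  finally show ?thesis .
qed

lemma sqnorm_mlmc_minus_mean_le:
  fixes q T :: nat and zs :: "trans list"
  defines "c \<equiv> if 2^q \<le> T then (2::real)^q else 0"
  defines "L \<equiv> \<lambda>j. sqnorm I (\<lambda>i. lvl (\<lambda>z. X z i) zs j - mean i)"
  shows "sqnorm I (\<lambda>i. mlmc (\<lambda>z. X z i) T q zs - mean i) \<le> 2 * L 0 + 4 * c\<^sup>2 * (L q + L (q - 1))"
proof -
  let ?\<Delta> = "\<lambda>j i. lvl (\<lambda>z. X z i) zs j - mean i"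
  have "(\<lambda>i. mlmc (\<lambda>z. X z i) T q zs - mean i) = (\<lambda>i. ?\<Delta> 0 i + c * (?\<Delta> q i - ?\<Delta> (q - 1) i))"
    by (auto simp: mlmc_def c_def algebra_simps)
  then have "sqnorm I (\<lambda>i. mlmc (\<lambda>z. X z i) T q zs - mean i) \<le>
      2 * L 0 + 2 * sqnorm I (\<lambda>i. c * (?\<Delta> q i - ?\<Delta> (q - 1) i))"
    unfolding L_def by (simp only: sqnorm_add_le)
  also have "\<dots> = 2 * L 0 + 2 * (c\<^sup>2 * sqnorm I (\<lambda>i. ?\<Delta> q i - ?\<Delta> (q - 1) i))"
    by (simp only: sqnorm_scale)
  also have "\<dots> \<le> 2 * L 0 + 2 * (c\<^sup>2 * (2 * L q + 2 * L (q - 1)))"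
    unfolding L_def by (intro add_left_mono mult_left_mono sqnorm_diff_le) simp_all
  finally show ?thesis by (simp add: algebra_simps)
qed

lemma mlmc_level_mse:
  "E (2^Suc k) s0 (\<lambda>zs. sqnorm I (\<lambda>i. mlmc (\<lambda>z. X z i) T (Suc k) zs - mean i))
     \<le> 8 * B + (if 2^Suc k \<le> T then 384 * B * real \<tau> * 2^Suc k else 0)"
proof -
  let ?q = "Suc k"
  let ?c = "if 2^?q \<le> T then (2::real)^?q else 0"
  let ?L = "\<lambda>j zs. sqnorm I (\<lambda>i. lvl (\<lambda>z. X z i) zs j - mean i)"
  have "E (2^?q) s0 (?L 0) \<le> E (2^?q) s0 (\<lambda>_. 4 * B)"
  proof (rule E_mono[OF s0])
    fix zs :: "trans list" assume "length zs = 2^?q" "set zs \<subseteq> S \<times> Act \<times> S"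
    then have "zs ! 0 \<in> S \<times> Act \<times> S" using nth_mem[of 0 zs] by auto
    then show "?L 0 zs \<le> 4 * B" unfolding level_minus_mean by (simp add: sqnorm_centred_le)
  qed
  then have L0: "E (2^?q) s0 (?L 0) \<le> 4 * B" by (simp add: E_const[OF s0])
  have Lq: "E (2^?q) s0 (?L ?q) \<le> 32 * B * real \<tau> / 2^?q" by (rule level_variance) simp
  have Lk: "E (2^?q) s0 (?L k) \<le> 32 * B * real \<tau> / 2^k" by (rule level_variance) (simp add: power_increasing)
  have "E (2^?q) s0 (\<lambda>zs. sqnorm I (\<lambda>i. mlmc (\<lambda>z. X z i) T ?q zs - mean i))
      \<le> 2 * E (2^?q) s0 (?L 0) + 4 * ?c\<^sup>2 * (E (2^?q) s0 (?L ?q) + E (2^?q) s0 (?L k))"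
    using E_mono[OF s0 sqnorm_mlmc_minus_mean_le[of T ?q]] by (simp only: E_add E_scale diff_Suc_1)
  also have "\<dots> \<le> 2 * (4 * B) + 4 * ?c\<^sup>2 * (32 * B * real \<tau> / 2^?q + 32 * B * real \<tau> / 2^k)"
    using L0 Lq Lk by (intro add_mono mult_left_mono) auto
  also have "\<dots> = 8 * B + (if 2^?q \<le> T then 384 * B * real \<tau> * 2^?q else 0)"
    by (cases "2^?q \<le> T") (simp_all add: power2_eq_square field_simps)
  finally show ?thesis .
qed

lemma mlmc_mse:
  assumes T: "2 \<le> T"
    and \<Phi>: "\<And>q zs. 0 \<le> \<Phi> q zs" "\<And>q zs. \<Phi> q zs \<le> sqnorm I (\<lambda>i. mlmc (\<lambda>z. X z i) T q zs - mean i)"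
  shows "mlmc_exp S Act P \<pi> s0 \<Phi> \<le> 784 * B * real \<tau> * ln (real T)"
proof -
  obtain J where J: "2^J \<le> T" "T < 2^Suc J" using ex_power_ivl1[of 2 T] T by auto
  define f where "f k = (1/2::real)^Suc k * E (2^Suc k) s0 (\<Phi> (Suc k))" for k
  define g where "g k = (1/2::real)^Suc k * (8 * B) + (if k \<in> {..<J} then 384 * B * real \<tau> else 0)" for k
  have f_nonneg: "0 \<le> f k" for k
    unfolding f_def by (intro mult_nonneg_nonneg E_nonneg[OF s0] \<Phi>(1)) simp
  have f_le_g: "f k \<le> g k" for k
  proof -
    have "E (2^Suc k) s0 (\<Phi> (Suc k)) \<le> E (2^Suc k) s0 (\<lambda>zs. sqnorm I (\<lambda>i. mlmc (\<lambda>z. X z i) T (Suc k) zs - mean i))"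
      by (rule E_mono[OF s0]) (rule \<Phi>(2))
    also have "\<dots> \<le> 8 * B + (if 2^Suc k \<le> T then 384 * B * real \<tau> * 2^Suc k else 0)"
      by (rule mlmc_level_mse)
    finally have "f k \<le> (1/2)^Suc k * (8 * B + (if 2^Suc k \<le> T then 384 * B * real \<tau> * 2^Suc k else 0))"
      unfolding f_def by (intro mult_left_mono) simp_all
    also have "\<dots> = g k"
    proof -
      have "(1/2::real)^Suc k * 2^Suc k = 1" by (simp flip: power_mult_distrib)
      then show ?thesis
        using pow2_le_iff_le_exponent[OF J, of "Suc k"] unfolding g_def
        by (simp only: distrib_left mult_zero_right lessThan_iff Suc_le_eq if_distrib)
           (simp add: mult.assoc[symmetric])
    qed
    finally show ?thesis .
  qed
  have g_sums: "g sums (1 * (8 * B) + (\<Sum>k<J. 384 * B * real \<tau>))"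
    unfolding g_def by (intro sums_add sums_mult2 power_half_series sums_If_finite_set) simp
  then have "summable g" by (rule sums_summable)
  moreover have "summable f"
    by (rule summable_comparison_test'[OF \<open>summable g\<close>, of 0]) (simp add: f_nonneg f_le_g)
  ultimately have "suminf f \<le> suminf g"
    by (intro suminf_le f_le_g)
  also have "\<dots> = 8 * B + real J * (384 * B * real \<tau>)"
    using g_sums by (simp add: sums_iff)
  also have "\<dots> \<le> 784 * B * real \<tau> * ln (real T)"
    using geometric_levels_le_ln B_nonneg mixing_time_pos T J(1) by simp
  finally show ?thesis unfolding mlmc_exp_def f_def .
qed

end

section \<open>Bounds for \<open>A\<^sub>g\<close> and \<open>b\<^sub>g\<close>\<close>

lemma vnorm_sq: "(vnorm n v)\<^sup>2 = sqnorm {..<n} v"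
  unfolding vnorm_def sqnorm_def by (simp add: sum_nonneg)

lemma opnorm_sq_le_frobenius:
  "(opnorm n M)\<^sup>2 \<le> sqnorm ({..<n} \<times> {..<n}) (\<lambda>p. M (fst p) (snd p))"
proof -
  define F where "F = (\<Sum>i<n. \<Sum>j<n. (M i j)\<^sup>2)"
  define A where "A = {vnorm n (\<lambda>i. \<Sum>j<n. M i j * x j) | x. vnorm n x \<le> 1}"
  have bound: "a \<le> sqrt F" if a_in: "a \<in> A" for a
  proof -
    obtain x where a: "a = vnorm n (\<lambda>i. \<Sum>j<n. M i j * x j)" and "vnorm n x \<le> 1"
      using a_in unfolding A_def by auto
    then have x: "(\<Sum>j<n. (x j)\<^sup>2) \<le> 1" unfolding vnorm_def by simp
    have "(\<Sum>i<n. (\<Sum>j<n. M i j * x j)\<^sup>2) \<le> (\<Sum>i<n. (\<Sum>j<n. (M i j)\<^sup>2) * (\<Sum>j<n. (x j)\<^sup>2))"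
      by (intro sum_mono Cauchy_Schwarz_ineq_sum)
    also have "\<dots> \<le> F"
      unfolding F_def using x by (intro sum_mono mult_left_le) (simp_all add: sum_nonneg)
    finally show ?thesis unfolding a vnorm_def by simp
  qed
  have "0 \<in> A" unfolding A_def by (auto intro!: exI[of _ "\<lambda>_. 0"] simp: vnorm_def)
  then have "0 \<le> opnorm n M" "opnorm n M \<le> sqrt F"
    unfolding opnorm_def A_def[symmetric] using bound by (auto intro!: cSup_upper cSup_least bdd_aboveI)
  then have "(opnorm n M)\<^sup>2 \<le> F" using power_mono[of "opnorm n M" "sqrt F" 2] by (simp add: F_def sum_nonneg)
  then show ?thesis unfolding F_def sqnorm_def by (simp add: sum.cartesian_product split_def)
qed

lemma sqnorm_Amat_le:
  assumes "1 \<le> c\<gamma>" and "(\<Sum>i<m. (\<phi> s i)\<^sup>2) \<le> 1" and "(\<Sum>i<m. (\<phi> s' i)\<^sup>2) \<le> 1"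
  shows "sqnorm ({..<m+1} \<times> {..<m+1}) (\<lambda>p. Amat c\<gamma> \<phi> (s, a, s') (fst p) (snd p)) \<le> 6 * c\<gamma>\<^sup>2"
proof -
  define D where "D = (\<Sum>j<m. (\<phi> s j - \<phi> s' j)\<^sup>2)"
  have "D \<le> 2 * sqnorm {..<m} (\<phi> s) + 2 * sqnorm {..<m} (\<phi> s')"
    unfolding D_def using sqnorm_diff_le[of "{..<m}" "\<phi> s" "\<phi> s'"] by (simp add: sqnorm_def)
  then have D: "D \<le> 4" using assms(2,3) unfolding sqnorm_def by simp
  have row0: "(\<Sum>j<Suc m. (Amat c\<gamma> \<phi> (s, a, s') 0 j)\<^sup>2) = c\<gamma>\<^sup>2"
    unfolding Amat_def by (simp add: sum.lessThan_Suc_shift del: sum.lessThan_Suc)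
  have row: "(\<Sum>j<Suc m. (Amat c\<gamma> \<phi> (s, a, s') (Suc i) j)\<^sup>2) = (\<phi> s i)\<^sup>2 * (1 + D)" for i
    unfolding Amat_def D_def
    by (simp add: sum.lessThan_Suc_shift power_mult_distrib sum_distrib_left distrib_left del: sum.lessThan_Suc)
  have "sqnorm ({..<m+1} \<times> {..<m+1}) (\<lambda>p. Amat c\<gamma> \<phi> (s, a, s') (fst p) (snd p))
      = (\<Sum>i<Suc m. \<Sum>j<Suc m. (Amat c\<gamma> \<phi> (s, a, s') i j)\<^sup>2)"
    unfolding sqnorm_def by (subst sum.cartesian_product) (simp add: split_def del: sum.lessThan_Suc)
  also have "\<dots> = (\<Sum>j<Suc m. (Amat c\<gamma> \<phi> (s, a, s') 0 j)\<^sup>2)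
      + (\<Sum>i<m. \<Sum>j<Suc m. (Amat c\<gamma> \<phi> (s, a, s') (Suc i) j)\<^sup>2)"
    by (rule sum.lessThan_Suc_shift)
  also have "\<dots> = c\<gamma>\<^sup>2 + (\<Sum>i<m. (\<phi> s i)\<^sup>2) * (1 + D)"
    by (simp only: row0 row sum_distrib_right)
  also have "\<dots> \<le> c\<gamma>\<^sup>2 + 1 * 5"
    using assms(2) D by (intro add_left_mono mult_mono) (auto simp: D_def sum_nonneg)
  also have "\<dots> \<le> 6 * c\<gamma>\<^sup>2" using assms(1) by (simp add: one_le_power)
  finally show ?thesis .
qed

lemma sqnorm_bvec_le:
  assumes "1 \<le> c\<gamma>" and "(\<Sum>i<m. (\<phi> s i)\<^sup>2) \<le> 1" and "\<bar>g s a\<bar> \<le> 1"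
  shows "sqnorm {..<m+1} (bvec c\<gamma> \<phi> g (s, a, s')) \<le> 2 * c\<gamma>\<^sup>2"
proof -
  have "sqnorm {..<m+1} (bvec c\<gamma> \<phi> g (s, a, s')) = (g s a)\<^sup>2 * (c\<gamma>\<^sup>2 + (\<Sum>i<m. (\<phi> s i)\<^sup>2))"
    unfolding sqnorm_def bvec_def
    by (simp add: sum.lessThan_Suc_shift power_mult_distrib sum_distrib_left algebra_simps del: sum.lessThan_Suc)
  also have "\<dots> \<le> 1 * (c\<gamma>\<^sup>2 + 1)"
    using assms(2,3) abs_le_square_iff[of "g s a" 1] by (intro mult_mono) (simp_all add: sum_nonneg)
  also have "\<dots> \<le> 2 * c\<gamma>\<^sup>2" using assms(1) by (simp add: one_le_power)
  finally show ?thesis .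
qed

lemma mlmc_estimator_mix_time:
  assumes "markov_policy S Act P \<pi>" "irreducible S (Ppi Act P \<pi>)" "aperiodic S (Ppi Act P \<pi>)" "s0 \<in> S"
    and "\<And>z. z \<in> S \<times> Act \<times> S \<Longrightarrow> sqnorm I (X z) \<le> B"
  shows "mlmc_estimator S Act P \<pi> (mix_time S (Ppi Act P \<pi>)) X I B s0"
proof -
  interpret markov_policy S Act P \<pi> by fact
  have "mixing_chain S (Ppi Act P \<pi>) (mix_time S (Ppi Act P \<pi>))"
    using mixing_chain_mix_time assms(2-4) by blast
  then show ?thesis unfolding mlmc_estimator_def mlmc_estimator_axioms_def using assms by blast
qed

lemma mlmc_Amat_estimates:
  fixes \<phi> :: "nat \<Rightarrow> nat \<Rightarrow> real"
  assumes "markov_policy S Act P \<pi>" "irreducible S (Ppi Act P \<pi>)" "aperiodic S (Ppi Act P \<pi>)" "s0 \<in> S"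
    and "\<forall>s\<in>S. vnorm m (\<phi> s) \<le> 1" "1 \<le> c\<gamma>" "2 \<le> T" "real (mix_time S (Ppi Act P \<pi>)) \<le> \<tau>"
  shows "(opnorm (m + 1) (\<lambda>i j. mlmc_exp S Act P \<pi> s0 (mlmc (\<lambda>z. Amat c\<gamma> \<phi> z i j) T)
            - statE S Act P \<pi> (\<lambda>z. Amat c\<gamma> \<phi> z i j)))\<^sup>2 \<le> 96 * c\<gamma>\<^sup>2 * \<tau> / real T"
    and "mlmc_exp S Act P \<pi> s0 (\<lambda>q zs. (opnorm (m + 1) (\<lambda>i j. mlmc (\<lambda>z. Amat c\<gamma> \<phi> z i j) T q zs
            - statE S Act P \<pi> (\<lambda>z. Amat c\<gamma> \<phi> z i j)))\<^sup>2) \<le> 4704 * c\<gamma>\<^sup>2 * \<tau> * ln (real T)"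
proof -
  have "mlmc_estimator S Act P \<pi> (mix_time S (Ppi Act P \<pi>))
      (\<lambda>z p. Amat c\<gamma> \<phi> z (fst p) (snd p)) ({..<m+1} \<times> {..<m+1}) (6 * c\<gamma>\<^sup>2) s0"
    using assms(5) by (intro mlmc_estimator_mix_time assms(1-4))
      (auto intro!: sqnorm_Amat_le[OF assms(6), simplified] simp: vnorm_def)
  then interpret A: mlmc_estimator S Act P \<pi> "mix_time S (Ppi Act P \<pi>)"
    "\<lambda>z p. Amat c\<gamma> \<phi> z (fst p) (snd p)" "{..<m+1} \<times> {..<m+1}" "6 * c\<gamma>\<^sup>2" s0 .
  have "(opnorm (m + 1) (\<lambda>i j. mlmc_exp S Act P \<pi> s0 (mlmc (\<lambda>z. Amat c\<gamma> \<phi> z i j) T)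
      - statE S Act P \<pi> (\<lambda>z. Amat c\<gamma> \<phi> z i j)))\<^sup>2 \<le> 96 * c\<gamma>\<^sup>2 * real (mix_time S (Ppi Act P \<pi>)) / real T"
    by (rule order_trans[OF opnorm_sq_le_frobenius]) (use A.mlmc_bias[OF assms(7)] in \<open>simp add: A.mean_def\<close>)
  then show "(opnorm (m + 1) (\<lambda>i j. mlmc_exp S Act P \<pi> s0 (mlmc (\<lambda>z. Amat c\<gamma> \<phi> z i j) T)
      - statE S Act P \<pi> (\<lambda>z. Amat c\<gamma> \<phi> z i j)))\<^sup>2 \<le> 96 * c\<gamma>\<^sup>2 * \<tau> / real T"
    by (rule order_trans) (use assms(8) in \<open>intro divide_right_mono mult_left_mono; simp\<close>)
  have "mlmc_exp S Act P \<pi> s0 (\<lambda>q zs. (opnorm (m + 1) (\<lambda>i j. mlmc (\<lambda>z. Amat c\<gamma> \<phi> z i j) T q zs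
      - statE S Act P \<pi> (\<lambda>z. Amat c\<gamma> \<phi> z i j)))\<^sup>2)
      \<le> 784 * (6 * c\<gamma>\<^sup>2) * real (mix_time S (Ppi Act P \<pi>)) * ln (real T)"
  proof (rule A.mlmc_mse[OF assms(7)])
    fix q zs
    show "(opnorm (m + 1) (\<lambda>i j. mlmc (\<lambda>z. Amat c\<gamma> \<phi> z i j) T q zs - statE S Act P \<pi> (\<lambda>z. Amat c\<gamma> \<phi> z i j)))\<^sup>2
        \<le> sqnorm ({..<m + 1} \<times> {..<m + 1}) (\<lambda>p. mlmc (\<lambda>z. Amat c\<gamma> \<phi> z (fst p) (snd p)) T q zs - A.mean p)"
      by (rule order_trans[OF opnorm_sq_le_frobenius]) (simp add: A.mean_def)
  qed simp
  then show "mlmc_exp S Act P \<pi> s0 (\<lambda>q zs. (opnorm (m + 1) (\<lambda>i j. mlmc (\<lambda>z. Amat c\<gamma> \<phi> z i j) T q zs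
      - statE S Act P \<pi> (\<lambda>z. Amat c\<gamma> \<phi> z i j)))\<^sup>2) \<le> 4704 * c\<gamma>\<^sup>2 * \<tau> * ln (real T)"
    by (rule order_trans) (use assms(7,8) in \<open>intro mult_right_mono mult_left_mono; simp add: mult_left_mono\<close>)
qed

lemma mlmc_bvec_estimates:
  fixes \<phi> g :: "nat \<Rightarrow> nat \<Rightarrow> real"
  assumes "markov_policy S Act P \<pi>" "irreducible S (Ppi Act P \<pi>)" "aperiodic S (Ppi Act P \<pi>)" "s0 \<in> S"
    and "\<forall>s\<in>S. vnorm m (\<phi> s) \<le> 1" "\<forall>s\<in>S. \<forall>a\<in>Act. \<bar>g s a\<bar> \<le> 1"
    and "1 \<le> c\<gamma>" "2 \<le> T" "real (mix_time S (Ppi Act P \<pi>)) \<le> \<tau>"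
  shows "(vnorm (m + 1) (\<lambda>i. mlmc_exp S Act P \<pi> s0 (mlmc (\<lambda>z. bvec c\<gamma> \<phi> g z i) T)
            - statE S Act P \<pi> (\<lambda>z. bvec c\<gamma> \<phi> g z i)))\<^sup>2 \<le> 32 * c\<gamma>\<^sup>2 * \<tau> / real T"
    and "mlmc_exp S Act P \<pi> s0 (\<lambda>q zs. (vnorm (m + 1) (\<lambda>i. mlmc (\<lambda>z. bvec c\<gamma> \<phi> g z i) T q zs
            - statE S Act P \<pi> (\<lambda>z. bvec c\<gamma> \<phi> g z i)))\<^sup>2) \<le> 1568 * c\<gamma>\<^sup>2 * \<tau> * ln (real T)"
proof -
  have "mlmc_estimator S Act P \<pi> (mix_time S (Ppi Act P \<pi>)) (bvec c\<gamma> \<phi> g) {..<m+1} (2 * c\<gamma>\<^sup>2) s0"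
    using assms(5,6) by (intro mlmc_estimator_mix_time assms(1-4))
      (auto intro!: sqnorm_bvec_le[OF assms(7), simplified] simp: vnorm_def)
  then interpret b: mlmc_estimator S Act P \<pi> "mix_time S (Ppi Act P \<pi>)"
    "bvec c\<gamma> \<phi> g" "{..<m+1}" "2 * c\<gamma>\<^sup>2" s0 .
  have "(vnorm (m + 1) (\<lambda>i. mlmc_exp S Act P \<pi> s0 (mlmc (\<lambda>z. bvec c\<gamma> \<phi> g z i) T)
      - statE S Act P \<pi> (\<lambda>z. bvec c\<gamma> \<phi> g z i)))\<^sup>2 \<le> 32 * c\<gamma>\<^sup>2 * real (mix_time S (Ppi Act P \<pi>)) / real T"
    using b.mlmc_bias[OF assms(8)] unfolding vnorm_sq b.mean_def by simp
  then show "(vnorm (m + 1) (\<lambda>i. mlmc_exp S Act P \<pi> s0 (mlmc (\<lambda>z. bvec c\<gamma> \<phi> g z i) T)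
      - statE S Act P \<pi> (\<lambda>z. bvec c\<gamma> \<phi> g z i)))\<^sup>2 \<le> 32 * c\<gamma>\<^sup>2 * \<tau> / real T"
    by (rule order_trans) (use assms(9) in \<open>intro divide_right_mono mult_left_mono; simp\<close>)
  have "mlmc_exp S Act P \<pi> s0 (\<lambda>q zs. (vnorm (m + 1) (\<lambda>i. mlmc (\<lambda>z. bvec c\<gamma> \<phi> g z i) T q zs
      - statE S Act P \<pi> (\<lambda>z. bvec c\<gamma> \<phi> g z i)))\<^sup>2)
      \<le> 784 * (2 * c\<gamma>\<^sup>2) * real (mix_time S (Ppi Act P \<pi>)) * ln (real T)"
    by (rule b.mlmc_mse[OF assms(8)]) (simp_all add: vnorm_sq b.mean_def sqnorm_nonneg)
  then show "mlmc_exp S Act P \<pi> s0 (\<lambda>q zs. (vnorm (m + 1) (\<lambda>i. mlmc (\<lambda>z. bvec c\<gamma> \<phi> g z i) T q zs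
      - statE S Act P \<pi> (\<lambda>z. bvec c\<gamma> \<phi> g z i)))\<^sup>2) \<le> 1568 * c\<gamma>\<^sup>2 * \<tau> * ln (real T)"
    by (rule order_trans) (use assms(8,9) in \<open>intro mult_right_mono mult_left_mono; simp add: mult_left_mono\<close>)
qed

theorem lemma6:
  shows "\<exists>C::real. \<forall>(S::nat set) (Act::nat set) (P::nat \<Rightarrow> nat \<Rightarrow> nat \<Rightarrow> real)
      (r::nat \<Rightarrow> nat \<Rightarrow> real) (c::nat \<Rightarrow> nat \<Rightarrow> real) (m::nat) (\<phi>::nat \<Rightarrow> nat \<Rightarrow> real)
      (Pol::(nat \<Rightarrow> nat \<Rightarrow> real) set) (\<pi>::nat \<Rightarrow> nat \<Rightarrow> real) (g::nat \<Rightarrow> nat \<Rightarrow> real)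
      (c\<gamma>::real) (Tmax::nat) (s0::nat).
    finite S \<and> S \<noteq> {} \<and> finite Act \<and> Act \<noteq> {} \<and> is_kernel S Act P \<and>
    (\<forall>s\<in>S. \<forall>a\<in>Act. 0 \<le> r s a \<and> r s a \<le> 1 \<and> -1 \<le> c s a \<and> c s a \<le> 1) \<and>
    (\<forall>p. is_policy S Act p \<longrightarrow>
        irreducible S (Ppi Act P p) \<and> aperiodic S (Ppi Act P p)) \<and>
    (\<forall>p\<in>Pol. is_policy S Act p) \<and>
    bdd_above ((\<lambda>p. real (mix_time S (Ppi Act P p))) ` Pol) \<and>
    (\<forall>s\<in>S. vnorm m (\<phi> s) \<le> 1) \<and>
    \<pi> \<in> Pol \<and> (g = r \<or> g = c) \<and> c\<gamma> \<ge> 1 \<and> Tmax \<ge> 2 \<and> s0 \<in> S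
    \<longrightarrow>
    (let \<tau> = Sup ((\<lambda>p. real (mix_time S (Ppi Act P p))) ` Pol);
         Abar = (\<lambda>i j. statE S Act P \<pi> (\<lambda>z. Amat c\<gamma> \<phi> z i j));
         bbar = (\<lambda>i. statE S Act P \<pi> (\<lambda>z. bvec c\<gamma> \<phi> g z i));
         Aq = (\<lambda>q zs i j. mlmc (\<lambda>z. Amat c\<gamma> \<phi> z i j) Tmax q zs);
         bq = (\<lambda>q zs i. mlmc (\<lambda>z. bvec c\<gamma> \<phi> g z i) Tmax q zs)
     in (opnorm (m + 1) (\<lambda>i j. mlmc_exp S Act P \<pi> s0 (\<lambda>q zs. Aq q zs i j) - Abar i j))\<^sup>2
           \<le> C * c\<gamma>\<^sup>2 * \<tau> / real Tmax
      \<and> (vnorm (m + 1) (\<lambda>i. mlmc_exp S Act P \<pi> s0 (\<lambda>q zs. bq q zs i) - bbar i))\<^sup>2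
           \<le> C * c\<gamma>\<^sup>2 * \<tau> / real Tmax
      \<and> mlmc_exp S Act P \<pi> s0 (\<lambda>q zs. (opnorm (m + 1) (\<lambda>i j. Aq q zs i j - Abar i j))\<^sup>2)
           \<le> C * c\<gamma>\<^sup>2 * \<tau> * ln (real Tmax)
      \<and> mlmc_exp S Act P \<pi> s0 (\<lambda>q zs. (vnorm (m + 1) (\<lambda>i. bq q zs i - bbar i))\<^sup>2)
           \<le> C * c\<gamma>\<^sup>2 * \<tau> * ln (real Tmax))"
proof (intro exI[of _ 4704] allI impI, elim conjE, goal_cases)
  case (1 S Act P r c m \<phi> Pol \<pi> g c\<gamma> Tmax s0)
  define \<tau> where "\<tau> = Sup ((\<lambda>p. real (mix_time S (Ppi Act P p))) ` Pol)"
  from 1 have s0: "s0 \<in> S" and \<phi>: "\<forall>s\<in>S. vnorm m (\<phi> s) \<le> 1" and c\<gamma>: "1 \<le> c\<gamma>" and T: "2 \<le> Tmax"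
    and "is_policy S Act \<pi>" by blast+
  with 1 have markov: "markov_policy S Act P \<pi>" "irreducible S (Ppi Act P \<pi>)" "aperiodic S (Ppi Act P \<pi>)"
    unfolding markov_policy_def by auto
  have g: "\<forall>s\<in>S. \<forall>a\<in>Act. \<bar>g s a\<bar> \<le> 1"
  proof (intro ballI)
    fix s a assume "s \<in> S" "a \<in> Act"
    then have "0 \<le> r s a \<and> r s a \<le> 1 \<and> -1 \<le> c s a \<and> c s a \<le> 1" "g = r \<or> g = c" using 1 by blast+
    then show "\<bar>g s a\<bar> \<le> 1" by (auto simp: abs_le_iff)
  qed
  have \<tau>: "real (mix_time S (Ppi Act P \<pi>)) \<le> \<tau>"
    unfolding \<tau>_def using 1 by (intro cSup_upper) auto
  note A = mlmc_Amat_estimates[OF markov s0 \<phi> c\<gamma> T \<tau>] and b = mlmc_bvec_estimates[OF markov s0 \<phi> g c\<gamma> T \<tau>]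
  have "0 \<le> \<tau>" using \<tau> by (rule order_trans[rotated]) simp
  then show ?case unfolding Let_def \<tau>_def[symmetric]
    by (intro conjI order_trans[OF A(1)] order_trans[OF b(1)] order_trans[OF A(2)] order_trans[OF b(2)])
       (use T in \<open>auto intro!: divide_right_mono mult_right_mono\<close>)
qed

end
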